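(* Let $\mathcal{W}$ be an AVC. For any $\delta>0$, $\xi>0$ and $P\in\mathcal{P}(\mathcal{X})$ with $\min_xP(x)>0$, there exist $c$ sufficiently large and a function $E_1(\xi)$ with $E_1(\xi)>0$ for $\xi>0$ such that for every side information value $\mathcal{V}\in\mathcal{V}_c$, the set $T_P^c$ (used with all its elements as codewords) is a list-decodable code of blocklength $c$ for $\mathcal{W}$ under nosy maximal error, with $N$ messages and output-dependent list size $L(\mathbf{y}_1^c,\mathcal{V})$, where $$N=|T_P^c|\ge\exp\big(c(H(X)-\xi)\big),\qquad L(\mathbf{y}_1^c,\mathcal{V})\le\exp\Big(c\Big(\max_{V\in\mathcal{V}(\mathbf{y}_1^c,\delta)}H(X|Y)+\xi\Big)\Big),$$ and list-decoding error (probability that the transmitted codeword is not in the output list, for side information containing the true average channel) $\varepsilon_L\le\exp(-c\,E_1(\xi))$. Here $H(X)$ is computed under $P$ and, for $V\in\mathcal{V}(\mathbf{y}_1^c,\delta)$, $H(X|Y)$ is computed under the joint distribution $P(x)V(y|x)$.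
   Context: AVC: $\mathcal{W}=\{W(y|x,s):s\in\mathcal{S}\}$ with finite $\mathcal{X},\mathcal{S},\mathcal{Y}$, $W(\mathbf{y}|\mathbf{x},\mathbf{s})=\prod_iW(y_i|x_i,s_i)$; under nosy noise the state sequence may be any function of the transmitted codeword. $T_P^c\subset\mathcal{X}^c$ is the set of sequences of type $P$. For a chunk $\mathbf{x}\in\mathcal{X}^c$ and states $\mathbf{s}$, the average channel is $V(y|x)=\frac{1}{N(x|\mathbf{x})}\sum_{t=1}^cW(y|x_t,s_t)\mathbf{1}(x_t=x)$. The decoder is given a set $\mathcal{V}$ of channels containing this average channel, from a finite family $\mathcal{V}_c$ with $|\mathcal{V}_c|\le c^v$, $v<\infty$ fixed. For an output $\mathbf{y}_1^c$, $\mathcal{V}(\mathbf{y}_1^c,\delta)=\{V\in\mathcal{V}:\ d_{TV}(T_{\mathbf{y}_1^c},\sum_xP(x)V(\cdot|x))<\delta\}$, where $T_{\mathbf{y}_1^c}$ is the empirical distribution (type) of $\mathbf{y}_1^c$ and $d_{TV}$ is total variation distance. A list-decodable code outputs, for each received sequence and side information, a list of messages; its error is the maximum over messages and jammer strategies of the probability that the transmitted message is not in the list. *)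

theory Defs
  imports Complex_Main
begin

definition avc :: "('x::finite \<Rightarrow> 's::finite \<Rightarrow> 'y::finite \<Rightarrow> real) \<Rightarrow> bool" where
  "avc W \<longleftrightarrow> (\<forall>x s y. W x s y \<ge> 0) \<and> (\<forall>x s. (\<Sum>y\<in>UNIV. W x s y) = 1)"

definition stoch :: "('x::finite \<Rightarrow> 'y::finite \<Rightarrow> real) \<Rightarrow> bool" where
  "stoch V \<longleftrightarrow> (\<forall>x y. V x y \<ge> 0) \<and> (\<forall>x. (\<Sum>y\<in>UNIV. V x y) = 1)"

definition typ_class :: "('x \<Rightarrow> real) \<Rightarrow> nat \<Rightarrow> 'x list set" where
  "typ_class P c = {xs. length xs = c \<and> (\<forall>a. real (count_list xs a) = real c * P a)}"

definition avg_channel ::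
  "('x \<Rightarrow> 's \<Rightarrow> 'y \<Rightarrow> real) \<Rightarrow> 'x list \<Rightarrow> 's list \<Rightarrow> 'x \<Rightarrow> 'y \<Rightarrow> real" where
  "avg_channel W xs ss = (\<lambda>a b.
     (\<Sum>t<length xs. if xs ! t = a then W a (ss ! t) b else 0) / real (count_list xs a))"

definition emp_dist :: "'y list \<Rightarrow> 'y \<Rightarrow> real" where
  "emp_dist ys = (\<lambda>b. real (count_list ys b) / real (length ys))"

definition tv_dist :: "('y::finite \<Rightarrow> real) \<Rightarrow> ('y \<Rightarrow> real) \<Rightarrow> real" where
  "tv_dist p q = (1/2) * (\<Sum>b\<in>UNIV. \<bar>p b - q b\<bar>)"

definition out_marg :: "('x::finite \<Rightarrow> real) \<Rightarrow> ('x \<Rightarrow> 'y \<Rightarrow> real) \<Rightarrow> 'y \<Rightarrow> real" where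
  "out_marg P V = (\<lambda>b. \<Sum>a\<in>UNIV. P a * V a b)"

definition Vset ::
  "('x::finite \<Rightarrow> 'y::finite \<Rightarrow> real) set \<Rightarrow> ('x \<Rightarrow> real) \<Rightarrow> 'y list \<Rightarrow> real \<Rightarrow> ('x \<Rightarrow> 'y \<Rightarrow> real) set" where
  "Vset \<V> P ys \<delta> = {V \<in> \<V>. tv_dist (emp_dist ys) (out_marg P V) < \<delta>}"

text \<open>Entropies in nats, with the convention 0 log 0 = 0.\<close>
definition entropy :: "('x::finite \<Rightarrow> real) \<Rightarrow> real" where
  "entropy P = - (\<Sum>a\<in>UNIV. if P a > 0 then P a * ln (P a) else 0)"

definition cond_entropy :: "('x::finite \<Rightarrow> real) \<Rightarrow> ('x \<Rightarrow> 'y::finite \<Rightarrow> real) \<Rightarrow> real" where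
  "cond_entropy P V = - (\<Sum>a\<in>UNIV. \<Sum>b\<in>UNIV.
      if P a * V a b > 0 then P a * V a b * ln (P a * V a b / out_marg P V b) else 0)"

definition chan_prob ::
  "('x \<Rightarrow> 's \<Rightarrow> 'y \<Rightarrow> real) \<Rightarrow> 'x list \<Rightarrow> 's list \<Rightarrow> 'y list \<Rightarrow> real" where
  "chan_prob W xs ss ys = (\<Prod>t<length xs. W (xs ! t) (ss ! t) (ys ! t))"

definition list_err ::
  "('x \<Rightarrow> 's \<Rightarrow> 'y \<Rightarrow> real) \<Rightarrow> ('y list \<Rightarrow> 'x list set) \<Rightarrow> 'x list \<Rightarrow> 's list \<Rightarrow> real" where
  "list_err W Dec xs ss =
     (\<Sum>ys\<in>{ys. length ys = length xs \<and> xs \<notin> Dec ys}. chan_prob W xs ss ys)"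

end

theory Submission
  imports Defs "HOL-Combinatorics.Multiset_Permutations" "HOL-Library.FuncSet"
    "HOL-Real_Asymp.Real_Asymp"
begin

text \<open>
  The decoder keeps every codeword \<open>x\<close> of type \<open>P\<close> for which some \<open>V \<in> \<V>\<close> is consistent with the
  output type (total variation \<open>< \<eta>\<close>) and makes the empirical log-likelihood
  \<open>\<Sum>\<^sub>t ln V\<^sub>l(y\<^sub>t|x\<^sub>t)\<close> at least \<open>c (\<ell>(V) - \<eta>)\<close>, where \<open>V\<^sub>l = (1-l) V + l/|Y|\<close> is a smoothed
  channel (so that all logarithms are bounded) and \<open>\<ell>(V)\<close> is the expected log-likelihood.
\<close>

text \<open>The second-order bound \<open>exp x \<le> 1 + x + x\<^sup>2\<close>, known from the library for \<open>0 \<le> x \<le> 1\<close>,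
  holds on all of \<open>[-1,1]\<close>; it controls the moment generating functions in the Chernoff bound.\<close>
lemma exp_le_quadratic:
  fixes x :: real assumes "-1 \<le> x" "x \<le> 1" shows "exp x \<le> 1 + x + x\<^sup>2"
proof (cases "x \<ge> 0")
  case True thus ?thesis using exp_bound assms by auto
next
  case False
  define y where "y = -x"
  have y: "0 \<le> y" "y \<le> 1" using False assms y_def by auto
  have "1 + y/2 \<le> exp (y/2)" by (rule exp_ge_add_one_self)
  hence "(1 + y/2)^2 \<le> exp (y/2) ^2" using y by (intro power_mono) auto
  also have "exp (y/2) ^2 = exp y" by (simp add: power2_eq_square flip: exp_add)
  finally have e: "(1 + y/2)^2 \<le> exp y" .
  have pos: "0 < (1 + y/2)^2" using y by auto
  have "(1 - y + y^2) * (1 + y/2)^2 = 1 + y^2/4 + 3*y^3/4 + y^4/4"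
    unfolding power2_eq_square power3_eq_cube power4_eq_xxxx by (simp add: field_simps)
  hence "(1 - y + y^2) * (1 + y/2)^2 \<ge> 1" using y by simp
  hence "1 / (1 + y/2)^2 \<le> 1 - y + y^2" using pos by (simp add: divide_simps)
  moreover have "exp x = 1 / exp y" using y_def by (simp add: exp_minus field_simps)
  moreover have "1 / exp y \<le> 1 / (1 + y/2)^2" using e pos by (intro divide_left_mono) auto
  ultimately show ?thesis using y_def by simp
qed

text \<open>Logarithmic (polynomial-in-\<open>c\<close>) factors are eventually absorbed by any exponential
  slack \<open>a c\<close>; this is how all the "\<open>c\<close> sufficiently large" conditions are met.\<close>
lemma eventually_log_le_linear:
  fixes A B a :: real assumes "a > 0"
  shows "\<forall>\<^sub>F c in sequentially. A + B * ln (real c + 1) \<le> a * real c"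
proof -
  have "((\<lambda>c. (A + B * ln (real c + 1)) / real c) \<longlongrightarrow> 0) sequentially"
    by real_asymp
  hence "\<forall>\<^sub>F c in sequentially. (A + B * ln (real c + 1)) / real c < a"
    using assms by (rule order_tendstoD)
  moreover have "\<forall>\<^sub>F c in sequentially. c \<ge> 1" by (rule eventually_ge_at_top)
  ultimately show ?thesis
    by eventually_elim (simp add: pos_divide_less_eq)
qed

text \<open>The lower bound is one term of
  the exponential series; the upper bound follows by induction using
  \<open>e (n+1)\<^sup>n\<^sup>+\<^sup>2 \<le> (n+2)\<^sup>n\<^sup>+\<^sup>2\<close>.\<close>
lemma fact_lower_bound: "real n ^ n / exp (real n) \<le> fact n"
proof -
  have su: "(\<lambda>k. real n ^ k / fact k) sums exp (real n)"
    using exp_converges[of "real n"] by (simp add: divide_inverse ac_simps)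
  have "(\<Sum>k\<in>{n}. real n ^ k / fact k) \<le> (\<Sum>k. real n ^ k / fact k)"
    by (rule sum_le_suminf[OF sums_summable[OF su]]) auto
  hence "real n ^ n / fact n \<le> exp (real n)" using sums_unique[OF su] by simp
  thus ?thesis by (simp add: field_simps)
qed

lemma exp_mult_pow_le: "exp 1 * (real n + 1) ^ (n+2) \<le> (real n + 2) ^ (n+2)"
proof -
  define y where "y = 1 / (real n + 2)"
  have y: "0 < y" "y < 1" by (auto simp: y_def)
  have "1 - y \<le> exp (-y)" using exp_ge_add_one_self[of "-y"] by simp
  hence "(1 - y)^(n+2) \<le> exp (-y) ^ (n+2)" using y by (intro power_mono) auto
  also have "exp (-y) ^ (n+2) = exp (real (n+2) * (-y))" by (rule exp_of_nat_mult[symmetric])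
  also have "real (n+2) * (-y) = -1" by (simp add: y_def)
  also have "1 - y = (real n + 1) / (real n + 2)" by (simp add: y_def field_simps)
  finally have "(real n + 1)^(n+2) \<le> exp (-1) * (real n + 2)^(n+2)"
    by (simp add: power_divide divide_le_eq)
  hence "exp 1 * (real n + 1)^(n+2) \<le> exp 1 * (exp (-1) * (real n + 2)^(n+2))"
    by (intro mult_left_mono) auto
  also have "\<dots> = (real n + 2)^(n+2)" by (simp add: mult.assoc[symmetric] exp_minus)
  finally show ?thesis .
qed

lemma fact_le_succ_pow: "fact n \<le> (real n + 1) ^ (n+1) / exp (real n)"
proof (induction n)
  case 0 thus ?case by simp
next
  case (Suc n)
  have "fact (Suc n) = (real n + 1) * fact n" by simp
  also have "\<dots> \<le> (real n + 1) * ((real n + 1) ^ (n+1) / exp (real n))"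
    by (intro mult_left_mono Suc.IH) auto
  also have "\<dots> = exp 1 * (real n + 1)^(n+2) / exp (real n + 1)"
    by (simp add: exp_add)
  also have "\<dots> \<le> (real n + 2)^(n+2) / exp (real n + 1)"
    using exp_mult_pow_le[of n] by (intro divide_right_mono) auto
  finally show ?case by (simp add: add.commute)
qed

lemma fact_upper_bound:
  assumes n: "n \<ge> 1" shows "fact n \<le> exp 1 * (real n + 1) * real n ^ n / exp (real n)"
proof -
  have "(1 + 1 / real n)^n \<le> exp (1 / real n) ^ n"
    by (intro power_mono exp_ge_add_one_self) auto
  also have "\<dots> = exp 1" using n by (simp add: exp_of_nat_mult[symmetric])
  also have "(1 + 1 / real n)^n = (real n + 1)^n / real n ^ n"
    using n by (simp add: field_simps power_divide)
  finally have pow: "(real n + 1) ^ n \<le> exp 1 * real n ^ n" using n by (simp add: divide_le_eq)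
  have "fact n \<le> (real n + 1) * (real n + 1) ^ n / exp (real n)"
    using fact_le_succ_pow[of n] by simp
  also have "\<dots> \<le> (real n + 1) * (exp 1 * real n ^ n) / exp (real n)"
    by (intro divide_right_mono mult_left_mono pow) auto
  finally show ?thesis by (simp add: mult.assoc mult.left_commute)
qed

lemma finite_words: "finite {xs::'a::finite list. length xs = n}"
  using finite_lists_length_eq[of "UNIV::'a set" n] by simp

lemma sum_words_prod:
  fixes f :: "nat \<Rightarrow> 'a::finite \<Rightarrow> real"
  shows "(\<Sum>xs\<in>{xs. length xs = n}. \<Prod>t<n. f t (xs!t)) = (\<Prod>t<n. \<Sum>a\<in>UNIV. f t a)"
proof (induction n arbitrary: f)
  case 0 thus ?case by simp
next
  case (Suc n)
  have eq: "{xs::'a list. length xs = Suc n} = (\<lambda>(a,xs). a#xs) ` (UNIV \<times> {xs. length xs = n})"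
    by (auto simp: length_Suc_conv image_iff)
  have inj: "inj_on (\<lambda>(a,xs). a#xs) (UNIV \<times> {xs::'a list. length xs = n})"
    by (auto simp: inj_on_def)
  have "(\<Sum>xs\<in>{xs. length xs = Suc n}. \<Prod>t<Suc n. f t (xs!t))
      = (\<Sum>(a,xs)\<in>UNIV \<times> {xs. length xs = n}. f 0 a * (\<Prod>t<n. f (Suc t) (xs!t)))"
    unfolding eq by (subst sum.reindex[OF inj])
      (auto simp only: case_prod_unfold prod.lessThan_Suc_shift intro!: sum.cong, simp)
  also have "\<dots> = (\<Sum>a\<in>UNIV. f 0 a * (\<Sum>xs\<in>{xs. length xs = n}. \<Prod>t<n. f (Suc t) (xs!t)))"
    by (simp add: sum.cartesian_product[symmetric] sum_distrib_left)
  also have "\<dots> = (\<Sum>a\<in>UNIV. f 0 a) * (\<Prod>t<n. \<Sum>a\<in>UNIV. f (Suc t) a)"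
    by (simp add: Suc.IH[of "\<lambda>t. f (Suc t)"] sum_distrib_right)
  also have "\<dots> = (\<Prod>t<Suc n. \<Sum>a\<in>UNIV. f t a)"
    by (simp only: prod.lessThan_Suc_shift)
  finally show ?case .
qed

lemma sum_fiber:
  fixes g :: "nat \<Rightarrow> 'z::finite" and h :: "'z \<Rightarrow> real"
  shows "(\<Sum>t<n. h (g t)) = (\<Sum>z\<in>UNIV. real (card {t. t<n \<and> g t = z}) * h z)"
proof -
  have "(\<Sum>t<n. h (g t)) = (\<Sum>z\<in>UNIV. \<Sum>t\<in>{t. t \<in> {..<n} \<and> g t = z}. h (g t))"
    by (rule sum.group[symmetric]) auto
  also have "\<dots> = (\<Sum>z\<in>UNIV. real (card {t. t<n \<and> g t = z}) * h z)"
    by (intro sum.cong refl) simp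
  finally show ?thesis .
qed

lemma sum_count_list:
  fixes xs :: "'a::finite list" and h :: "'a \<Rightarrow> real"
  shows "(\<Sum>t<length xs. h (xs!t)) = (\<Sum>a\<in>UNIV. real (count_list xs a) * h a)"
  by (simp add: sum_fiber count_list_eq_length_filter length_filter_conv_card eq_commute)

lemma sum_Un_le_nonneg:
  fixes f :: "'a \<Rightarrow> real"
  assumes "finite A" "finite B" "\<And>x. f x \<ge> 0"
  shows "sum f (A \<union> B) \<le> sum f A + sum f B"
proof -
  have "sum f (A \<inter> B) \<ge> 0" using assms by (intro sum_nonneg) auto
  thus ?thesis using sum_Un[OF assms(1,2), of f] by simp
qed

lemma sum_UN_le_nonneg:
  fixes f :: "'a \<Rightarrow> real"
  assumes "finite I" "\<And>i. finite (S i)" "\<And>x. f x \<ge> 0"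
  shows "sum f (\<Union>i\<in>I. S i) \<le> (\<Sum>i\<in>I. sum f (S i))"
  using assms(1)
proof (induction I rule: finite_induct)
  case empty thus ?case by simp
next
  case (insert i I)
  have "sum f (\<Union>j\<in>insert i I. S j) \<le> sum f (S i) + sum f (\<Union>j\<in>I. S j)"
    using assms insert by (simp add: sum_Un_le_nonneg)
  also have "\<dots> \<le> sum f (S i) + (\<Sum>j\<in>I. sum f (S j))" using insert by simp
  finally show ?case using insert by simp
qed

section \<open>A Chernoff bound for product laws on words\<close>

text \<open>Words \<open>ys\<close> of length \<open>n\<close> are drawn with probability \<open>\<Prod>\<^sub>t p t (ys!t)\<close>.\<close>
definition upper_dev ::
  "(nat \<Rightarrow> 'y::finite \<Rightarrow> real) \<Rightarrow> (nat \<Rightarrow> 'y \<Rightarrow> real) \<Rightarrow> nat \<Rightarrow> real \<Rightarrow> 'y list set" where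
  "upper_dev p g n d = {ys. length ys = n \<and>
     (\<Sum>t<n. \<Sum>b\<in>UNIV. p t b * g t b) + real n * d \<le> (\<Sum>t<n. g t (ys!t))}"

lemma finite_upper_dev: "finite (upper_dev p g n d)"
  by (rule finite_subset[OF _ finite_words[of n]]) (auto simp: upper_dev_def)

lemma exponential_markov:
  fixes p g :: "nat \<Rightarrow> 'y::finite \<Rightarrow> real" and s d :: real
  assumes p0: "\<And>t b. t < n \<Longrightarrow> p t b \<ge> 0" and s: "s \<ge> 0"
  defines "m t \<equiv> \<Sum>b\<in>UNIV. p t b * g t b"
  shows "(\<Sum>ys\<in>upper_dev p g n d. \<Prod>t<n. p t (ys!t))
      \<le> exp (- (s * n * d)) * (\<Prod>t<n. \<Sum>b\<in>UNIV. p t b * exp (s * (g t b - m t)))"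
proof -
  define F where "F ys = (\<Prod>t<n. p t (ys!t) * exp (s * (g t (ys!t) - m t)))" for ys :: "'y list"
  have F_eq: "F ys = (\<Prod>t<n. p t (ys!t)) * exp (s * ((\<Sum>t<n. g t (ys!t)) - (\<Sum>t<n. m t)))" for ys
  proof -
    have "(\<Sum>t<n. s * (g t (ys!t) - m t)) = s * ((\<Sum>t<n. g t (ys!t)) - (\<Sum>t<n. m t))"
      by (simp only: sum_distrib_left[symmetric] sum_subtractf)
    thus ?thesis by (simp add: F_def prod.distrib exp_sum[symmetric])
  qed
  have F0: "F ys \<ge> 0" for ys unfolding F_def using p0 by (intro prod_nonneg) auto
  have "(\<Sum>ys\<in>upper_dev p g n d. \<Prod>t<n. p t (ys!t))
      \<le> (\<Sum>ys\<in>upper_dev p g n d. exp (- (s * n * d)) * F ys)"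
  proof (intro sum_mono)
    fix ys assume "ys \<in> upper_dev p g n d"
    hence "n * d \<le> (\<Sum>t<n. g t (ys!t)) - (\<Sum>t<n. m t)" by (simp add: upper_dev_def m_def)
    hence "exp (s * (n * d)) \<le> exp (s * ((\<Sum>t<n. g t (ys!t)) - (\<Sum>t<n. m t)))"
      using s by (simp add: mult_left_mono)
    hence "(\<Prod>t<n. p t (ys!t)) * exp (s * (n * d)) \<le> F ys"
      unfolding F_eq using p0 by (intro mult_left_mono prod_nonneg) auto
    thus "(\<Prod>t<n. p t (ys!t)) \<le> exp (- (s * n * d)) * F ys"
      by (simp add: exp_minus field_simps)
  qed
  also have "\<dots> \<le> (\<Sum>ys\<in>{ys. length ys = n}. exp (- (s * n * d)) * F ys)"
    using F0 by (intro sum_mono2 finite_words) (auto simp: upper_dev_def)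
  also have "\<dots> = exp (- (s * n * d)) * (\<Prod>t<n. \<Sum>b\<in>UNIV. p t b * exp (s * (g t b - m t)))"
    unfolding F_def sum_distrib_left[symmetric]
    by (rule arg_cong[OF sum_words_prod[of "\<lambda>t b. p t b * exp (s * (g t b - m t))"]])
  finally show ?thesis .
qed

lemma mgf_bound:
  fixes p g :: "'y::finite \<Rightarrow> real"
  assumes p0: "\<And>b. p b \<ge> 0" and p1: "(\<Sum>b\<in>UNIV. p b) = 1"
    and gR: "\<And>b. \<bar>g b - m\<bar> \<le> R" and m: "m = (\<Sum>b\<in>UNIV. p b * g b)"
    and s: "s \<ge> 0" "s * R \<le> 1"
  shows "(\<Sum>b\<in>UNIV. p b * exp (s * (g b - m))) \<le> exp (s^2 * R^2)"
proof -
  have R: "R \<ge> 0" using gR[of undefined] by linarith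
  have "exp (s * (g b - m)) \<le> 1 + s * (g b - m) + (s * R)^2" for b
  proof -
    have u: "\<bar>s * (g b - m)\<bar> \<le> s * R"
      using gR[of b] s by (simp add: abs_mult mult_left_mono)
    have "exp (s * (g b - m)) \<le> 1 + s * (g b - m) + (s * (g b - m))^2"
      using u s(2) by (intro exp_le_quadratic) (simp_all add: abs_le_iff)
    also have "(s * (g b - m))^2 \<le> (s * R)^2"
      using u s R by (simp add: abs_le_square_iff[symmetric])
    finally show ?thesis by simp
  qed
  hence "(\<Sum>b\<in>UNIV. p b * exp (s * (g b - m))) \<le> (\<Sum>b\<in>UNIV. p b * (1 + s * (g b - m) + (s * R)^2))"
    by (intro sum_mono mult_left_mono p0)
  also have "\<dots> = (\<Sum>b\<in>UNIV. p b) + s * ((\<Sum>b\<in>UNIV. p b * g b) - m * (\<Sum>b\<in>UNIV. p b))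
      + (s * R)^2 * (\<Sum>b\<in>UNIV. p b)"
    by (simp add: algebra_simps sum.distrib sum_distrib_left sum_distrib_right sum_subtractf)
  also have "\<dots> = 1 + (s * R)^2" using p1 m by simp
  also have "\<dots> \<le> exp ((s * R)^2)" by (rule exp_ge_add_one_self)
  finally show ?thesis by (simp add: power_mult_distrib)
qed

text \<open>Chernoff--Hoeffding bound: if each statistic stays within \<open>R\<close> of its mean, a deviation of
  \<open>n \<eta>\<close> has probability at most \<open>exp(-n \<eta>\<^sup>2 / (4 R\<^sup>2))\<close>; the choice \<open>s = \<eta> / (2R\<^sup>2)\<close> is optimal
  for the quadratic MGF bound.\<close>
lemma chernoff_bound:
  fixes p g :: "nat \<Rightarrow> 'y::finite \<Rightarrow> real"
  assumes p0: "\<And>t b. t < n \<Longrightarrow> p t b \<ge> 0" and p1: "\<And>t. t < n \<Longrightarrow> (\<Sum>b\<in>UNIV. p t b) = 1"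
    and gR: "\<And>t b. t < n \<Longrightarrow> \<bar>g t b - (\<Sum>b'\<in>UNIV. p t b' * g t b')\<bar> \<le> R"
    and R: "R > 0" and eta: "\<eta> > 0" "\<eta> \<le> 2 * R"
  shows "(\<Sum>ys\<in>upper_dev p g n \<eta>. \<Prod>t<n. p t (ys!t)) \<le> exp (- (n * \<eta>^2 / (4 * R^2)))"
proof -
  define s where "s = \<eta> / (2 * R^2)"
  have s0: "s \<ge> 0" using R eta by (simp add: s_def)
  have sR: "s * R \<le> 1" using R eta by (simp add: s_def power2_eq_square field_simps)
  have "(\<Sum>ys\<in>upper_dev p g n \<eta>. \<Prod>t<n. p t (ys!t))
      \<le> exp (- (s * n * \<eta>)) * (\<Prod>t<n. \<Sum>b\<in>UNIV. p t b *
           exp (s * (g t b - (\<Sum>b'\<in>UNIV. p t b' * g t b'))))"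
    by (rule exponential_markov[OF p0 s0])
  also have "\<dots> \<le> exp (- (s * n * \<eta>)) * (\<Prod>t<n. exp (s^2 * R^2))"
    by (intro mult_left_mono prod_mono conjI sum_nonneg mgf_bound[OF _ _ _ refl s0 sR])
      (auto intro!: mult_nonneg_nonneg p0 p1 gR)
  also have "\<dots> = exp (n * (s^2 * R^2) - s * n * \<eta>)"
    by (simp add: exp_of_nat_mult[symmetric] exp_diff exp_minus field_simps)
  also have "n * (s^2 * R^2) - s * n * \<eta> = - (n * \<eta>^2 / (4 * R^2))"
    using R unfolding s_def by (simp add: power2_eq_square field_simps)
  finally show ?thesis .
qed

lemma chernoff_bound_range:
  fixes p g :: "nat \<Rightarrow> 'y::finite \<Rightarrow> real"
  assumes p0: "\<And>t b. p t b \<ge> 0" and p1: "\<And>t. (\<Sum>b\<in>UNIV. p t b) = 1"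
    and g: "\<And>t b. lo t \<le> g t b" "\<And>t b. g t b \<le> lo t + R"
    and R: "R > 0" and eta: "\<eta> > 0" "\<eta> \<le> 2 * R"
  shows "(\<Sum>ys\<in>upper_dev p g n \<eta>. \<Prod>t<n. p t (ys!t)) \<le> exp (- (n * \<eta>^2 / (4 * R^2)))"
proof (rule chernoff_bound[OF p0 p1 _ R eta])
  fix t b
  have "(\<Sum>b'\<in>UNIV. p t b' * lo t) \<le> (\<Sum>b'\<in>UNIV. p t b' * g t b')"
    "(\<Sum>b'\<in>UNIV. p t b' * g t b') \<le> (\<Sum>b'\<in>UNIV. p t b' * (lo t + R))"
    using g by (auto intro!: sum_mono mult_left_mono p0)
  moreover have "(\<Sum>b'\<in>UNIV. p t b' * c) = c" for c
    using p1[of t] by (simp add: sum_distrib_right[symmetric])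
  ultimately show "\<bar>g t b - (\<Sum>b'\<in>UNIV. p t b' * g t b')\<bar> \<le> R"
    using g[of t b] by (simp add: abs_le_iff)
qed

section \<open>The size of a type class\<close>

lemma type_counts:
  fixes P :: "'x::finite \<Rightarrow> real"
  assumes P: "\<And>a. P a > 0" "(\<Sum>a\<in>UNIV. P a) = 1" and c: "c \<ge> 1" and N: "\<And>a. real c * P a \<in> \<nat>"
  obtains n :: "'x \<Rightarrow> nat" where "\<And>a. real (n a) = real c * P a" "\<And>a. n a > 0"
    "(\<Sum>a\<in>UNIV. n a) = c"
proof -
  have "\<forall>a. \<exists>m::nat. real m = real c * P a"
  proof
    fix a show "\<exists>m::nat. real m = real c * P a" using N[of a] by (auto elim!: Nats_cases)
  qed
  then obtain n where n: "\<And>a. real (n a) = real c * P a" by metis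
  have "real (n a) > 0" for a using P(1)[of a] c n[of a] by simp
  hence pos: "n a > 0" for a by simp
  have "real (\<Sum>a\<in>UNIV. n a) = real c * (\<Sum>a\<in>UNIV. P a)"
    by (simp add: n sum_distrib_left)
  hence "(\<Sum>a\<in>UNIV. n a) = c" using P(2) by (simp only: mult_1_right of_nat_eq_iff)
  thus ?thesis using n pos that by blast
qed

text \<open>The type class is the set of permutations of the multiset with multiplicities \<open>n\<close>, so its
  size is the multinomial coefficient \<open>c! / \<Prod>\<^sub>a n(a)!\<close>.\<close>
lemma typ_class_card:
  fixes P :: "'x::finite \<Rightarrow> real" and n :: "'x \<Rightarrow> nat"
  assumes n: "\<And>a. real (n a) = real c * P a" and pos: "\<And>a. n a > 0" and sn: "(\<Sum>a\<in>UNIV. n a) = c"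
  shows "real (card (typ_class P c)) * (\<Prod>a\<in>UNIV. fact (n a)) = fact c"
proof -
  define M where "M = (\<Sum>a\<in>UNIV. replicate_mset (n a) a)"
  have cM: "count M a = n a" for a
    by (simp add: M_def count_sum)
  have sM: "set_mset M = UNIV"
    using pos cM count_greater_zero_iff[of M] by auto
  have szM: "size M = c" using sn by (simp add: size_multiset_overloaded_eq sM cM)
  have T: "typ_class P c = permutations_of_multiset M"
  proof (intro set_eqI iffI)
    fix xs assume xs: "xs \<in> typ_class P c"
    have "count (mset xs) a = count M a" for a
    proof -
      have "real (count_list xs a) = real (n a)" using xs n by (simp add: typ_class_def)
      thus ?thesis by (simp add: count_mset cM)
    qed
    thus "xs \<in> permutations_of_multiset M"
      by (simp add: permutations_of_multiset_def multiset_eqI)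
  next
    fix xs assume "xs \<in> permutations_of_multiset M"
    hence m: "mset xs = M" by (simp add: permutations_of_multiset_def)
    have "length xs = c" using szM m by (metis size_mset)
    moreover have "real (count_list xs a) = real c * P a" for a
      using m n[of a] cM[of a] by (simp add: count_mset[symmetric])
    ultimately show "xs \<in> typ_class P c" by (simp add: typ_class_def)
  qed
  have "card (permutations_of_multiset M) * (\<Prod>x\<in>set_mset M. fact (count M x)) = fact (size M)"
    by (rule card_permutations_of_multiset_aux)
  hence "card (typ_class P c) * (\<Prod>a\<in>UNIV. fact (n a)) = (fact c :: nat)"
    by (simp add: T sM cM szM)
  hence "real (card (typ_class P c) * (\<Prod>a\<in>UNIV. fact (n a))) = real (fact c :: nat)" by simp
  thus ?thesis by (simp add: of_nat_fact)
qed

lemma prod_fact_upper: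
  fixes n :: "'x::finite \<Rightarrow> nat"
  assumes pos: "\<And>a. n a > 0" and sn: "(\<Sum>a\<in>UNIV. n a) = c"
  shows "(\<Prod>a\<in>UNIV. fact (n a)) \<le> (exp 1 * (real c + 1)) ^ card (UNIV::'x set)
           * exp (\<Sum>a\<in>UNIV. real (n a) * ln (real (n a))) * exp (- real c)"
proof -
  define A where "A = exp 1 * (real c + 1)"
  have nle: "n a \<le> c" for a using sn member_le_sum[of a UNIV n] by auto
  have fn: "fact (n a) \<le> A * exp (real (n a) * ln (real (n a))) * exp (- real (n a))" for a
  proof -
    have "fact (n a) \<le> exp 1 * (real (n a) + 1) * real (n a) ^ (n a) / exp (real (n a))"
      using pos[of a] by (intro fact_upper_bound) simp
    also have "real (n a) ^ (n a) = exp (real (n a) * ln (real (n a)))"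
      using pos[of a] by (simp add: exp_of_nat_mult)
    also have "exp 1 * (real (n a) + 1) * exp (real (n a) * ln (real (n a))) / exp (real (n a))
        \<le> A * exp (real (n a) * ln (real (n a))) * exp (- real (n a))"
      using nle[of a] by (simp add: A_def exp_minus divide_inverse mult_right_mono)
    finally show ?thesis .
  qed
  have "(\<Prod>a\<in>UNIV. fact (n a))
      \<le> (\<Prod>a\<in>UNIV. A * exp (real (n a) * ln (real (n a))) * exp (- real (n a)))"
    by (intro prod_mono conjI fn) auto
  also have "\<dots> = A ^ card (UNIV::'x set) * exp (\<Sum>a\<in>UNIV. real (n a) * ln (real (n a)))
      * exp (- real c)"
  proof -
    have "exp (- real c) = (\<Prod>a\<in>UNIV. exp (- real (n a)))"
      using sn by (simp add: exp_sum[symmetric] sum_negf flip: of_nat_sum)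
    thus ?thesis by (simp add: prod.distrib exp_sum)
  qed
  finally show ?thesis by (simp add: A_def)
qed

lemma typ_class_lower:
  fixes P :: "'x::finite \<Rightarrow> real"
  assumes P: "\<And>a. P a > 0" "(\<Sum>a\<in>UNIV. P a) = 1" and c: "c \<ge> 1" and N: "\<And>a. real c * P a \<in> \<nat>"
  shows "exp (real c * entropy P) / (exp 1 * (real c + 1)) ^ card (UNIV::'x set)
           \<le> real (card (typ_class P c))"
proof -
  obtain n where n: "\<And>a. real (n a) = real c * P a" and pos: "\<And>a. n a > 0"
    and sn: "(\<Sum>a\<in>UNIV. n a) = c"
    using type_counts[OF P c N] by blast
  define A where "A = (exp 1 * (real c + 1)) ^ card (UNIV::'x set)"
  define S where "S = (\<Sum>a\<in>UNIV. real (n a) * ln (real (n a)))"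
  have ent: "real c * ln (real c) - S = real c * entropy P"
  proof -
    have "S = (\<Sum>a\<in>UNIV. real c * P a * (ln (real c) + ln (P a)))"
      unfolding S_def using c P(1) by (intro sum.cong refl) (simp add: n ln_mult)
    also have "\<dots> = real c * ln (real c) * (\<Sum>a\<in>UNIV. P a) + real c * (\<Sum>a\<in>UNIV. P a * ln (P a))"
      by (simp add: algebra_simps sum.distrib sum_distrib_left sum_distrib_right)
    finally show ?thesis using P by (simp add: entropy_def)
  qed
  have ppos: "(\<Prod>a\<in>UNIV. fact (n a) :: real) > 0" by (intro prod_pos) auto
  have "exp (real c * entropy P) / A = (exp (real c * ln (real c)) / exp (real c)) / (A * exp S * exp (- real c))"
    unfolding ent[symmetric] by (simp add: exp_diff exp_minus field_simps)
  also have "\<dots> \<le> fact c / (\<Prod>a\<in>UNIV. fact (n a))"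
  proof (rule frac_le)
    show "exp (real c * ln (real c)) / exp (real c) \<le> fact c"
      using fact_lower_bound[of c] c by (simp add: exp_of_nat_mult)
    show "(\<Prod>a\<in>UNIV. fact (n a)) \<le> A * exp S * exp (- real c)"
      unfolding A_def S_def by (rule prod_fact_upper[OF pos sn])
  qed (use ppos in auto)
  also have "\<dots> = real (card (typ_class P c))"
    using typ_class_card[OF n pos sn] ppos by (simp add: field_simps)
  finally show ?thesis by (simp add: A_def)
qed

section \<open>Smoothed channels and the key entropy inequality\<close>

text \<open>The smoothed channel \<open>V\<^sub>l = (1-l) V + l/|Y|\<close> has all entries at least \<open>l/|Y|\<close>, so its
  log-likelihoods are bounded; \<open>\<ell>\<close> is the expected log-likelihood under \<open>P(x) V(y|x)\<close>.\<close>
definition smooth :: "real \<Rightarrow> ('x \<Rightarrow> 'y::finite \<Rightarrow> real) \<Rightarrow> 'x \<Rightarrow> 'y \<Rightarrow> real" where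
  "smooth l V a b = (1 - l) * V a b + l / real (card (UNIV::'y set))"

definition ell :: "real \<Rightarrow> ('x::finite \<Rightarrow> real) \<Rightarrow> ('x \<Rightarrow> 'y::finite \<Rightarrow> real) \<Rightarrow> real" where
  "ell l P V = (\<Sum>a\<in>UNIV. \<Sum>b\<in>UNIV. P a * V a b * ln (smooth l V a b))"

lemma card_UNIV_ge_1: "real (card (UNIV::'a::finite set)) \<ge> 1"
  using card_gt_0_iff[of "UNIV::'a set"] by simp

lemma stoch_le1: "stoch V \<Longrightarrow> V a b \<le> 1"
  using member_le_sum[of b UNIV "V a"] by (simp add: stoch_def)

lemma smooth_bounds:
  assumes "stoch V" "0 < l" "l < 1"
  shows "l / real (card (UNIV::'y set)) \<le> smooth l V a (b::'y::finite)" "smooth l V a b \<le> 1"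
    "smooth l V a b > 0"
proof -
  have Q: "real (card (UNIV::'y set)) \<ge> 1" by (rule card_UNIV_ge_1)
  have v: "0 \<le> V a b" "V a b \<le> 1" using assms stoch_le1 by (auto simp: stoch_def)
  show lo: "l / real (card (UNIV::'y set)) \<le> smooth l V a b" using v assms by (simp add: smooth_def)
  have "l / real (card (UNIV::'y set)) \<le> l" using Q assms by (simp add: divide_le_eq)
  moreover have "(1 - l) * V a b \<le> (1 - l) * 1" using v assms by (intro mult_left_mono) auto
  ultimately show "smooth l V a b \<le> 1" by (simp add: smooth_def)
  have "l / real (card (UNIV::'y set)) > 0" using Q assms by simp
  thus "smooth l V a b > 0" using lo by linarith
qed

lemma ln_between:
  assumes "0 < l" "l / real (card (UNIV::'y::finite set)) \<le> z" "z \<le> 1"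
  shows "- ln (real (card (UNIV::'y set)) / l) \<le> ln z" "ln z \<le> 0"
proof -
  have Q: "real (card (UNIV::'y set)) \<ge> 1" by (rule card_UNIV_ge_1)
  hence lQ: "0 < l / real (card (UNIV::'y set))" using assms by simp
  hence "ln (l / real (card (UNIV::'y set))) \<le> ln z" using assms by simp
  thus "- ln (real (card (UNIV::'y set)) / l) \<le> ln z" using assms Q by (simp add: ln_div)
  show "ln z \<le> 0" using assms lQ by simp
qed

lemma stoch_smooth:
  assumes "stoch V" "0 < l" "l < 1" shows "stoch (smooth l V)"
proof -
  have "(\<Sum>y\<in>UNIV. smooth l V x y) = 1" for x
  proof -
    have "(\<Sum>y\<in>UNIV. smooth l V x y) = (1 - l) * (\<Sum>y\<in>UNIV. V x y)
        + real (card (UNIV::'b set)) * (l / real (card (UNIV::'b set)))"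
      unfolding smooth_def by (simp add: sum.distrib sum_distrib_left)
    thus ?thesis using assms(1) card_UNIV_ge_1[where 'a='b] by (simp add: stoch_def)
  qed
  thus ?thesis using smooth_bounds[OF assms] by (auto simp: stoch_def less_imp_le)
qed

lemma out_marg_bounds:
  assumes "stoch V" "\<And>a. P a \<ge> 0" "(\<Sum>a\<in>UNIV. P a) = 1"
  shows "0 \<le> out_marg P V b" "out_marg P V b \<le> 1" "(\<Sum>b\<in>UNIV. out_marg P V b) = 1"
proof -
  show "0 \<le> out_marg P V b" using assms by (auto simp: out_marg_def stoch_def intro!: sum_nonneg)
  have "out_marg P V b \<le> (\<Sum>a\<in>UNIV. P a * 1)" unfolding out_marg_def
    using assms stoch_le1 by (intro sum_mono mult_left_mono) auto
  thus "out_marg P V b \<le> 1" using assms by simp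
  have "(\<Sum>b\<in>UNIV. out_marg P V b) = (\<Sum>a\<in>UNIV. P a * (\<Sum>b\<in>UNIV. V a b))"
    unfolding out_marg_def by (subst sum.swap) (simp add: sum_distrib_left)
  thus "(\<Sum>b\<in>UNIV. out_marg P V b) = 1" using assms by (simp add: stoch_def)
qed

lemma out_marg_smooth:
  fixes V :: "'x::finite \<Rightarrow> 'y::finite \<Rightarrow> real"
  assumes "(\<Sum>a\<in>UNIV. P a) = 1"
  shows "out_marg P (smooth l V) b = (1 - l) * out_marg P V b + l / real (card (UNIV::'y set))"
proof -
  let ?Q = "real (card (UNIV::'y set))"
  have "out_marg P (smooth l V) b = (\<Sum>a\<in>UNIV. (1 - l) * (P a * V a b) + (l / ?Q) * P a)"
    unfolding out_marg_def smooth_def by (intro sum.cong) (simp_all add: algebra_simps)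
  also have "\<dots> = (1 - l) * (\<Sum>a\<in>UNIV. P a * V a b) + (l / ?Q) * (\<Sum>a\<in>UNIV. P a)"
    by (simp add: sum.distrib sum_distrib_left)
  finally have "out_marg P (smooth l V) b
      = (1 - l) * (\<Sum>a\<in>UNIV. P a * V a b) + (l / ?Q) * (\<Sum>a\<in>UNIV. P a)" .
  thus ?thesis using assms by (simp add: out_marg_def)
qed

lemma joint_le_out_marg:
  fixes P :: "'x::finite \<Rightarrow> real" and V :: "'x \<Rightarrow> 'y::finite \<Rightarrow> real"
  assumes "stoch V" "\<And>a. P a > 0" shows "P a * V a b \<le> out_marg P V b"
  unfolding out_marg_def using assms
  by (intro member_le_sum[of a UNIV "\<lambda>a. P a * V a b"]) (auto simp: stoch_def less_imp_le)

lemma cond_entropy_decomp: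
  assumes V: "stoch V" and P: "\<And>a. P a > 0"
  shows "cond_entropy P V = - (\<Sum>a\<in>UNIV. P a * ln (P a))
      - (\<Sum>a\<in>UNIV. \<Sum>b\<in>UNIV. P a * V a b * ln (V a b))
      + (\<Sum>b\<in>UNIV. out_marg P V b * ln (out_marg P V b))"
proof -
  have tm: "(if P a * V a b > 0 then P a * V a b * ln (P a * V a b / out_marg P V b) else 0)
     = P a * V a b * ln (P a) + P a * V a b * ln (V a b) - P a * V a b * ln (out_marg P V b)"
    for a b
  proof (cases "V a b > 0")
    case True
    have j0: "P a * V a b > 0" using True P[of a] by simp
    have "P a * V a b \<le> out_marg P V b" by (rule joint_le_out_marg[OF V P])
    hence q: "out_marg P V b > 0" using j0 by linarith
    have eq: "ln (P a * V a b / out_marg P V b) = ln (P a) + ln (V a b) - ln (out_marg P V b)"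
      using True P[of a] q by (simp add: ln_div ln_mult)
    have "(if P a * V a b > 0 then P a * V a b * ln (P a * V a b / out_marg P V b) else 0)
        = P a * V a b * (ln (P a) + ln (V a b) - ln (out_marg P V b))"
      using j0 by (simp only: eq if_True)
    thus ?thesis by (simp add: algebra_simps)
  next
    case False
    hence "V a b = 0" using V by (auto simp: stoch_def intro: antisym)
    thus ?thesis by simp
  qed
  have s1: "(\<Sum>a\<in>UNIV. \<Sum>b\<in>UNIV. P a * V a b * ln (P a)) = (\<Sum>a\<in>UNIV. P a * ln (P a))"
  proof (intro sum.cong refl)
    fix a
    have "(\<Sum>b\<in>UNIV. P a * V a b * ln (P a)) = P a * ln (P a) * (\<Sum>b\<in>UNIV. V a b)"
      by (simp add: sum_distrib_left algebra_simps)
    thus "(\<Sum>b\<in>UNIV. P a * V a b * ln (P a)) = P a * ln (P a)" using V by (simp add: stoch_def)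
  qed
  have s3: "(\<Sum>a\<in>UNIV. \<Sum>b\<in>UNIV. P a * V a b * ln (out_marg P V b))
      = (\<Sum>b\<in>UNIV. out_marg P V b * ln (out_marg P V b))"
    by (subst sum.swap) (simp add: out_marg_def sum_distrib_right)
  show ?thesis
    unfolding cond_entropy_def tm s1[symmetric] s3[symmetric]
    by (simp add: sum.distrib sum_subtractf)
qed

text \<open>\<open>H(X|Y) \<le> |X| |Y|\<close>; all we need is that these conditional entropies are bounded, so that
  the suprema in the list-size bound are meaningful.\<close>
lemma cond_entropy_bdd:
  fixes P :: "'x::finite \<Rightarrow> real" and V :: "'x \<Rightarrow> 'y::finite \<Rightarrow> real"
  assumes V: "stoch V" and P: "\<And>a. P a > 0" "(\<Sum>a\<in>UNIV. P a) = 1"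
  shows "cond_entropy P V \<le> real (card (UNIV::'x set) * card (UNIV::'y set))"
proof -
  have t: "- (if P a * V a b > 0 then P a * V a b * ln (P a * V a b / out_marg P V b) else 0) \<le> 1"
    for a :: 'x and b :: 'y
  proof (cases "P a * V a b > 0")
    case True
    define j where "j = P a * V a b"
    have j0: "j > 0" using True j_def by simp
    have le: "j \<le> out_marg P V b" unfolding j_def by (rule joint_le_out_marg[OF V P(1)])
    hence q: "out_marg P V b > 0" using j0 by linarith
    have "- (j * ln (j / out_marg P V b)) = j * ln (out_marg P V b / j)"
      using j0 q by (simp add: ln_div algebra_simps)
    also have "\<dots> \<le> j * (out_marg P V b / j - 1)"
      using j0 q by (intro mult_left_mono ln_le_minus_one) auto
    also have "\<dots> = out_marg P V b - j" using j0 by (simp add: right_diff_distrib)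
    also have "\<dots> \<le> 1"
      using out_marg_bounds(2)[OF V _ P(2), of b] P(1) True j_def by (simp add: less_imp_le)
    finally show ?thesis using True j_def by simp
  qed simp
  have "cond_entropy P V = (\<Sum>a\<in>UNIV. \<Sum>b\<in>UNIV.
      - (if P a * V a b > 0 then P a * V a b * ln (P a * V a b / out_marg P V b) else 0))"
    by (simp add: cond_entropy_def sum_negf)
  also have "\<dots> \<le> (\<Sum>a\<in>(UNIV::'x set). \<Sum>b\<in>(UNIV::'y set). 1)"
    by (intro sum_mono t)
  finally show ?thesis by simp
qed

lemma ell_lower:
  assumes V: "stoch V" and P: "\<And>a. P a \<ge> 0" "(\<Sum>a\<in>UNIV. P a) = 1" and l: "0 < l" "l < 1"
  shows "(\<Sum>a\<in>UNIV. \<Sum>b\<in>UNIV. P a * V a b * ln (V a b)) + ln (1 - l) \<le> ell l P V"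
proof -
  have "P a * V a b * (ln (V a b) + ln (1 - l)) \<le> P a * V a b * ln (smooth l V a b)" for a b
  proof (cases "V a b > 0")
    case True
    have "(1 - l) * V a b \<le> smooth l V a b"
      unfolding smooth_def using l card_UNIV_ge_1[where 'a='b] by simp
    moreover have "(1 - l) * V a b > 0" using True l by simp
    ultimately have "ln ((1 - l) * V a b) \<le> ln (smooth l V a b)" by simp
    moreover have "ln ((1 - l) * V a b) = ln (V a b) + ln (1 - l)" using True l by (simp add: ln_mult)
    ultimately show ?thesis using P(1)[of a] True by (intro mult_left_mono) auto
  next
    case False
    hence "V a b = 0" using V by (auto simp: stoch_def intro: antisym)
    thus ?thesis by simp
  qed
  hence "(\<Sum>a\<in>UNIV. \<Sum>b\<in>UNIV. P a * V a b * (ln (V a b) + ln (1 - l))) \<le> ell l P V"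
    unfolding ell_def by (intro sum_mono)
  moreover have "(\<Sum>a\<in>UNIV. \<Sum>b\<in>UNIV. P a * V a b * (ln (V a b) + ln (1 - l)))
      = (\<Sum>a\<in>UNIV. \<Sum>b\<in>UNIV. P a * V a b * ln (V a b)) + (\<Sum>a\<in>UNIV. P a * (\<Sum>b\<in>UNIV. V a b)) * ln (1 - l)"
    by (simp add: distrib_left sum.distrib sum_distrib_left sum_distrib_right mult.assoc)
  ultimately show ?thesis using V P(2) by (simp add: stoch_def)
qed

text \<open>One term of the cross-entropy estimate: \<open>q ln r \<le> q ln q + (r - q)\<close> (Gibbs, from
  \<open>ln x \<le> x - 1\<close>), and replacing the weight \<open>q\<close> by \<open>e\<close> costs \<open>|e - q| |ln r|\<close>.\<close>
lemma cross_entropy_term: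
  fixes e q r L :: real
  assumes q: "0 \<le> q" and r: "r > 0" and L: "\<bar>ln r\<bar> \<le> L"
  shows "e * ln r \<le> q * ln q + (r - q) + \<bar>e - q\<bar> * L"
proof -
  have "(e - q) * ln r \<le> \<bar>e - q\<bar> * \<bar>ln r\<bar>" by (metis abs_ge_self abs_mult)
  also have "\<dots> \<le> \<bar>e - q\<bar> * L" using L by (intro mult_left_mono) auto
  finally have weight: "(e - q) * ln r \<le> \<bar>e - q\<bar> * L" .
  have gibbs: "q * ln r \<le> q * ln q + (r - q)"
  proof (cases "q > 0")
    case True
    have "ln (r / q) \<le> r / q - 1" using True r by (intro ln_le_minus_one) simp
    hence "q * (ln r - ln q) \<le> q * (r / q - 1)"
      using True r by (intro mult_left_mono) (auto simp: ln_div)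
    thus ?thesis using True by (simp add: algebra_simps)
  next
    case False
    thus ?thesis using q r by simp
  qed
  show ?thesis using weight gibbs by (simp add: algebra_simps)
qed

lemma empirical_cross_entropy:
  fixes P :: "'x::finite \<Rightarrow> real" and V :: "'x \<Rightarrow> 'y::finite \<Rightarrow> real" and e :: "'y \<Rightarrow> real"
  assumes V: "stoch V" and P: "\<And>a. P a \<ge> 0" "(\<Sum>a\<in>UNIV. P a) = 1"
    and l: "0 < l" "l < 1" and tv: "tv_dist e (out_marg P V) < \<eta>"
  shows "(\<Sum>b\<in>UNIV. e b * ln (out_marg P (smooth l V) b))
     \<le> (\<Sum>b\<in>UNIV. out_marg P V b * ln (out_marg P V b))
       + 2 * \<eta> * ln (real (card (UNIV::'y set)) / l)"
proof -
  define Lg where "Lg = ln (real (card (UNIV::'y set)) / l)"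
  define q where "q = out_marg P V"
  define qt where "qt = out_marg P (smooth l V)"
  have qb: "0 \<le> q b" for b unfolding q_def using out_marg_bounds(1)[OF V P] .
  have qt_eq: "qt b = (1 - l) * q b + l / real (card (UNIV::'y set))" for b
    unfolding qt_def q_def by (rule out_marg_smooth[OF P(2)])
  have lQ: "l / real (card (UNIV::'y set)) > 0" using l card_UNIV_ge_1[where 'a='y] by simp
  have qt_b: "l / real (card (UNIV::'y set)) \<le> qt b" "qt b \<le> 1" for b
  proof -
    show "l / real (card (UNIV::'y set)) \<le> qt b" using qt_eq[of b] qb[of b] l by simp
    show "qt b \<le> 1" unfolding qt_def by (rule out_marg_bounds(2)[OF stoch_smooth[OF V l] P])
  qed
  have qt_pos: "qt b > 0" for b using qt_b(1)[of b] lQ by linarith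
  have lnqt: "\<bar>ln (qt b)\<bar> \<le> Lg" for b
    using ln_between[OF l(1) qt_b[of b]] unfolding Lg_def by linarith
  have Lg0: "Lg \<ge> 0" using lnqt[of undefined] by linarith
  have "(\<Sum>b\<in>UNIV. e b * ln (qt b)) \<le> (\<Sum>b\<in>UNIV. q b * ln (q b) + (qt b - q b) + \<bar>e b - q b\<bar> * Lg)"
    by (intro sum_mono cross_entropy_term[OF qb qt_pos lnqt])
  also have "\<dots> = (\<Sum>b\<in>UNIV. q b * ln (q b)) + ((\<Sum>b\<in>UNIV. qt b) - (\<Sum>b\<in>UNIV. q b))
      + 2 * tv_dist e q * Lg"
    by (simp add: sum.distrib sum_subtractf sum_distrib_right tv_dist_def)
  also have "(\<Sum>b\<in>UNIV. qt b) = 1" unfolding qt_def by (rule out_marg_bounds(3)[OF stoch_smooth[OF V l] P])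
  also have "(\<Sum>b\<in>UNIV. q b) = 1" unfolding q_def by (rule out_marg_bounds(3)[OF V P])
  also have "2 * tv_dist e q * Lg \<le> 2 * \<eta> * Lg"
    using tv Lg0 unfolding q_def by (intro mult_right_mono) auto
  finally show ?thesis by (simp add: q_def qt_def Lg_def)
qed

text \<open>The key inequality: the exponent in the counting bound for the codewords favoured by \<open>V\<close>
  exceeds \<open>H(X|Y)\<close> under \<open>P(x)V(y|x)\<close> only by a slack that vanishes as \<open>l, \<eta> \<rightarrow> 0\<close>.\<close>
lemma key_ineq:
  fixes P :: "'x::finite \<Rightarrow> real" and V :: "'x \<Rightarrow> 'y::finite \<Rightarrow> real" and e :: "'y \<Rightarrow> real"
  assumes V: "stoch V" and P: "\<And>a. P a > 0" "(\<Sum>a\<in>UNIV. P a) = 1"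
    and l: "0 < l" "l < 1" and tv: "tv_dist e (out_marg P V) < \<eta>"
  shows "entropy P + (\<Sum>b\<in>UNIV. e b * ln (out_marg P (smooth l V) b)) - ell l P V + \<eta>
     \<le> cond_entropy P V - ln (1 - l) + \<eta> + 2 * \<eta> * ln (real (card (UNIV::'y set)) / l)"
proof -
  have P0: "\<And>a. P a \<ge> 0" using P(1) less_imp_le by blast
  show ?thesis
    using ell_lower[OF V P0 P(2) l] empirical_cross_entropy[OF V P0 P(2) l tv]
      cond_entropy_decomp[OF V P(1)] P(1)
    by (simp add: entropy_def)
qed

section \<open>The list decoder and its list size\<close>

definition score_set ::
  "real \<Rightarrow> real \<Rightarrow> ('x::finite \<Rightarrow> real) \<Rightarrow> ('x \<Rightarrow> 'y::finite \<Rightarrow> real) \<Rightarrow> 'y list \<Rightarrow> 'x list set" where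
  "score_set l \<eta> P V ys = {xs \<in> typ_class P (length ys).
     real (length ys) * (ell l P V - \<eta>) \<le> (\<Sum>t<length ys. ln (smooth l V (xs!t) (ys!t)))}"

definition list_decoder ::
  "real \<Rightarrow> real \<Rightarrow> ('x::finite \<Rightarrow> real) \<Rightarrow> 'y::finite list \<Rightarrow> ('x \<Rightarrow> 'y \<Rightarrow> real) set \<Rightarrow> 'x list set" where
  "list_decoder l \<eta> P ys \<V> =
     (\<Union>V\<in>{V\<in>\<V>. tv_dist (emp_dist ys) (out_marg P V) < \<eta>}. score_set l \<eta> P V ys)"

lemma list_decoder_subset: "list_decoder l \<eta> P ys \<V> \<subseteq> typ_class P (length ys)"
  by (auto simp: list_decoder_def score_set_def)

lemma list_decoder_empty:
  assumes "Vset \<V> P ys \<delta> = {}" "\<eta> \<le> \<delta>" shows "list_decoder l \<eta> P ys \<V> = {}"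
  using assms by (fastforce simp: list_decoder_def Vset_def)

lemma finite_score_set: "finite (score_set l \<eta> P V ys)"
  by (rule finite_subset[OF _ finite_words[of "length ys"]]) (auto simp: score_set_def typ_class_def)

lemma finite_list_decoder: "finite (list_decoder l \<eta> P ys \<V>)"
  by (rule finite_subset[OF list_decoder_subset finite_subset[OF _ finite_words[of "length ys"]]])
    (auto simp: typ_class_def)

lemma count_emp: "real (count_list ys b) = real (length ys) * emp_dist ys b"
  by (cases "length ys = 0") (simp_all add: emp_dist_def)

text \<open>Counting by probability: the words of the score set all have probability at least
  \<open>exp(-c H(P) + c(\<ell>(V) - \<eta>))\<close> under the product law \<open>P(x) V\<^sub>l(y|x)\<close> jointly with \<open>ys\<close>, whose
  total mass is \<open>\<Prod>\<^sub>t (PV\<^sub>l)(y\<^sub>t) = exp(c \<Sum>\<^sub>b e(b) ln (PV\<^sub>l)(b))\<close> for the output type \<open>e\<close>.\<close>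
lemma score_set_card:
  fixes P :: "'x::finite \<Rightarrow> real" and V :: "'x \<Rightarrow> 'y::finite \<Rightarrow> real" and ys :: "'y list"
  assumes V: "stoch V" and P: "\<And>a. P a > 0" and l: "0 < l" "l < 1"
  shows "real (card (score_set l \<eta> P V ys)) \<le> exp (real (length ys) * (entropy P
     + (\<Sum>b\<in>UNIV. emp_dist ys b * ln (out_marg P (smooth l V) b)) - ell l P V + \<eta>))"
proof -
  define c where "c = length ys"
  define S where "S = score_set l \<eta> P V ys"
  define F where "F xs = (\<Prod>t<c. P (xs!t) * smooth l V (xs!t) (ys!t))" for xs :: "'x list"
  define qt where "qt = out_marg P (smooth l V)"
  define B where "B = - real c * entropy P + real c * (ell l P V - \<eta>)"
  have sp: "smooth l V a b > 0" for a b using smooth_bounds(3)[OF V l] .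
  have Sl: "S \<subseteq> {xs. length xs = c}" by (auto simp: S_def score_set_def typ_class_def c_def)
  have lnP: "(\<Sum>t<c. ln (P (xs!t))) = - real c * entropy P" if "xs \<in> typ_class P c" for xs
  proof -
    have len: "length xs = c" and cnt: "\<And>a. real (count_list xs a) = real c * P a"
      using that by (auto simp: typ_class_def)
    have "(\<Sum>t<c. ln (P (xs!t))) = (\<Sum>a\<in>UNIV. real (count_list xs a) * ln (P a))"
      using sum_count_list[of "\<lambda>a. ln (P a)" xs] len by simp
    also have "\<dots> = real c * (\<Sum>a\<in>UNIV. P a * ln (P a))" by (simp add: cnt sum_distrib_left mult.assoc)
    finally show ?thesis using P by (simp add: entropy_def)
  qed
  have F_exp: "F xs = exp ((\<Sum>t<c. ln (P (xs!t))) + (\<Sum>t<c. ln (smooth l V (xs!t) (ys!t))))" for xs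
    unfolding F_def using P sp by (simp add: exp_add exp_sum prod.distrib)
  have "real (card S) * exp B = (\<Sum>xs\<in>S. exp B)" by simp
  also have "\<dots> \<le> (\<Sum>xs\<in>S. F xs)"
  proof (intro sum_mono)
    fix xs assume "xs \<in> S"
    hence "B \<le> (\<Sum>t<c. ln (P (xs!t))) + (\<Sum>t<c. ln (smooth l V (xs!t) (ys!t)))"
      unfolding B_def using lnP[of xs] by (auto simp: S_def score_set_def c_def)
    thus "exp B \<le> F xs" unfolding F_exp by simp
  qed
  also have "\<dots> \<le> (\<Sum>xs\<in>{xs. length xs = c}. F xs)"
    by (intro sum_mono2 finite_words Sl) (simp add: F_exp)
  also have "\<dots> = (\<Prod>t<c. qt (ys!t))"
    unfolding F_def sum_words_prod[of "\<lambda>t a. P a * smooth l V a (ys!t)"]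
    by (simp add: qt_def out_marg_def)
  also have "\<dots> = exp (\<Sum>t<c. ln (qt (ys!t)))"
  proof -
    have "qt b > 0" for b
      unfolding qt_def out_marg_def using P sp by (intro sum_pos) auto
    thus ?thesis by (simp add: exp_sum)
  qed
  also have "(\<Sum>t<c. ln (qt (ys!t))) = real c * (\<Sum>b\<in>UNIV. emp_dist ys b * ln (qt b))"
    unfolding c_def using sum_count_list[of "\<lambda>b. ln (qt b)" ys]
    by (simp add: count_emp sum_distrib_left mult.assoc)
  finally have "real (card S) * exp B \<le> exp (real c * (\<Sum>b\<in>UNIV. emp_dist ys b * ln (qt b)))" .
  hence "real (card S) \<le> exp (real c * (\<Sum>b\<in>UNIV. emp_dist ys b * ln (qt b))) / exp B"
    by (simp add: le_divide_eq)
  also have "\<dots> = exp (real c * (entropy P + (\<Sum>b\<in>UNIV. emp_dist ys b * ln (qt b)) - ell l P V + \<eta>))"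
    unfolding B_def by (simp add: exp_diff[symmetric] algebra_simps)
  finally show ?thesis unfolding S_def c_def qt_def .
qed

text \<open>The joint type of a pair of sequences: the number of positions carrying each symbol pair.
  Log-likelihood scores depend on the codeword only through it.\<close>
definition joint_type :: "'x list \<Rightarrow> 'y list \<Rightarrow> 'x \<times> 'y \<Rightarrow> nat" where
  "joint_type xs ys ab = card {t. t < length ys \<and> (xs!t, ys!t) = ab}"

lemma sum_joint_type:
  fixes g :: "'x::finite \<Rightarrow> 'y::finite \<Rightarrow> real"
  shows "(\<Sum>t<length ys. g (xs!t) (ys!t))
    = (\<Sum>ab\<in>UNIV. real (joint_type xs ys ab) * g (fst ab) (snd ab))"
  unfolding joint_type_def using sum_fiber[of "\<lambda>ab. g (fst ab) (snd ab)" "\<lambda>t. (xs!t, ys!t)"] by simp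

lemma card_joint_types:
  fixes D :: "'x::finite list set" and ys :: "'y::finite list"
  shows "card ((\<lambda>xs. joint_type xs ys) ` D)
    \<le> (length ys + 1) ^ (card (UNIV::'x set) * card (UNIV::'y set))"
proof -
  have "joint_type xs ys ab \<le> length ys" for xs ab
  proof -
    have "joint_type xs ys ab \<le> card {..<length ys}" unfolding joint_type_def by (intro card_mono) auto
    thus ?thesis by simp
  qed
  hence "(\<lambda>xs. joint_type xs ys) ` D \<subseteq> Pi\<^sub>E UNIV (\<lambda>_. {..length ys})"
    by (auto simp: PiE_UNIV_domain)
  hence "card ((\<lambda>xs. joint_type xs ys) ` D) \<le> card (Pi\<^sub>E (UNIV::('x \<times> 'y) set) (\<lambda>_. {..length ys}))"
    by (intro card_mono finite_PiE) auto
  also have "\<dots> = (length ys + 1) ^ card (UNIV::('x \<times> 'y) set)" by (simp add: card_PiE)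
  finally show ?thesis by (simp flip: UNIV_Times_UNIV add: card_cartesian_product)
qed

lemma score_set_card_consistent:
  fixes P :: "'x::finite \<Rightarrow> real" and ys :: "'y::finite list" and \<V> :: "('x \<Rightarrow> 'y \<Rightarrow> real) set"
  assumes V: "V \<in> \<V>" "\<And>V. V \<in> \<V> \<Longrightarrow> stoch V" and P: "\<And>a. P a > 0" "(\<Sum>a\<in>UNIV. P a) = 1"
    and l: "0 < l" "l < 1" and tv: "tv_dist (emp_dist ys) (out_marg P V) < \<eta>" and \<eta>\<delta>: "\<eta> \<le> \<delta>"
    and slack: "- ln (1 - l) + \<eta> + 2 * \<eta> * ln (real (card (UNIV::'y set)) / l) \<le> \<sigma>"
  shows "real (card (score_set l \<eta> P V ys))
    \<le> exp (real (length ys) * (Sup (cond_entropy P ` Vset \<V> P ys \<delta>) + \<sigma>))"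
proof -
  have bdd: "bdd_above (cond_entropy P ` Vset \<V> P ys \<delta>)"
    by (rule bdd_aboveI[where M = "real (card (UNIV::'x set) * card (UNIV::'y set))"])
      (auto simp: Vset_def intro: cond_entropy_bdd[OF V(2) P, simplified])
  have "real (card (score_set l \<eta> P V ys)) \<le> exp (real (length ys) * (entropy P
      + (\<Sum>b\<in>UNIV. emp_dist ys b * ln (out_marg P (smooth l V) b)) - ell l P V + \<eta>))"
    by (rule score_set_card[OF V(2)[OF V(1)] P(1) l])
  also have "\<dots> \<le> exp (real (length ys) * (cond_entropy P V + \<sigma>))"
    using key_ineq[OF V(2)[OF V(1)] P l tv] slack by (intro exp_mono mult_left_mono) auto
  also have "cond_entropy P V \<le> Sup (cond_entropy P ` Vset \<V> P ys \<delta>)"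
    using V(1) tv \<eta>\<delta> bdd by (intro cSup_upper) (auto simp: Vset_def)
  hence "exp (real (length ys) * (cond_entropy P V + \<sigma>))
      \<le> exp (real (length ys) * (Sup (cond_entropy P ` Vset \<V> P ys \<delta>) + \<sigma>))"
    by (intro exp_mono mult_left_mono) auto
  finally show ?thesis .
qed

text \<open>The decoder's union over possibly infinitely many channels collapses to a union over
  joint types: for each joint type occurring in the list, one consistent channel \<open>G J\<close> whose
  score set contains all listed codewords of that joint type suffices.\<close>
lemma list_decoder_joint_type_cover:
  fixes ys :: "'y::finite list" and P :: "'x::finite \<Rightarrow> real" and l \<eta> :: real
    and \<V> :: "('x \<Rightarrow> 'y \<Rightarrow> real) set"
  defines "T \<equiv> (\<lambda>xs. joint_type xs ys) ` list_decoder l \<eta> P ys \<V>"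
  obtains G where "\<And>J. J \<in> T \<Longrightarrow> G J \<in> \<V> \<and> tv_dist (emp_dist ys) (out_marg P (G J)) < \<eta>"
    "list_decoder l \<eta> P ys \<V> \<subseteq> (\<Union>J\<in>T. score_set l \<eta> P (G J) ys)"
proof -
  define c where "c = length ys"
  define good where "good V J \<longleftrightarrow> V \<in> \<V> \<and> tv_dist (emp_dist ys) (out_marg P V) < \<eta> \<and>
      real c * (ell l P V - \<eta>) \<le> (\<Sum>ab\<in>UNIV. real (J ab) * ln (smooth l V (fst ab) (snd ab)))"
    for V J
  define G where "G J = (SOME V. good V J)" for J
  have score_iff: "xs \<in> score_set l \<eta> P V ys \<longleftrightarrow> xs \<in> typ_class P c \<and>
      real c * (ell l P V - \<eta>) \<le> (\<Sum>ab\<in>UNIV. real (joint_type xs ys ab) * ln (smooth l V (fst ab) (snd ab)))"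
    for xs V
    by (simp add: score_set_def sum_joint_type[of "\<lambda>a b. ln (smooth l V a b)"] c_def)
  have G: "good (G (joint_type xs ys)) (joint_type xs ys)"
    "xs \<in> score_set l \<eta> P (G (joint_type xs ys)) ys" if D: "xs \<in> list_decoder l \<eta> P ys \<V>" for xs
  proof -
    obtain V where gV: "good V (joint_type xs ys)" and xs: "xs \<in> typ_class P c"
      using D by (auto simp: list_decoder_def score_iff good_def)
    from gV show "good (G (joint_type xs ys)) (joint_type xs ys)"
      unfolding G_def by (rule someI[where P="\<lambda>V. good V (joint_type xs ys)"])
    thus "xs \<in> score_set l \<eta> P (G (joint_type xs ys)) ys"
      using xs by (simp add: score_iff good_def)
  qed
  show ?thesis
    by (rule that[of G]) (use G in \<open>auto simp: T_def good_def\<close>)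
qed

text \<open>List size: at most \<open>(c+1)^{|X||Y|}\<close> joint types, each contributing a small score set.\<close>
lemma list_decoder_card:
  fixes P :: "'x::finite \<Rightarrow> real" and ys :: "'y::finite list" and \<V> :: "('x \<Rightarrow> 'y \<Rightarrow> real) set"
  assumes V: "\<And>V. V \<in> \<V> \<Longrightarrow> stoch V" and P: "\<And>a. P a > 0" "(\<Sum>a\<in>UNIV. P a) = 1"
    and l: "0 < l" "l < 1" and \<eta>\<delta>: "\<eta> \<le> \<delta>"
    and slack: "- ln (1 - l) + \<eta> + 2 * \<eta> * ln (real (card (UNIV::'y set)) / l) \<le> \<sigma>"
  shows "real (card (list_decoder l \<eta> P ys \<V>))
    \<le> (real (length ys) + 1) ^ (card (UNIV::'x set) * card (UNIV::'y set))
       * exp (real (length ys) * (Sup (cond_entropy P ` Vset \<V> P ys \<delta>) + \<sigma>))"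
proof -
  define D where "D = list_decoder l \<eta> P ys \<V>"
  define T where "T = (\<lambda>xs. joint_type xs ys) ` D"
  define B where "B = exp (real (length ys) * (Sup (cond_entropy P ` Vset \<V> P ys \<delta>) + \<sigma>))"
  define K where "K = card (UNIV::'x set) * card (UNIV::'y set)"
  obtain G where G: "\<And>J. J \<in> T \<Longrightarrow> G J \<in> \<V> \<and> tv_dist (emp_dist ys) (out_marg P (G J)) < \<eta>"
    and cover: "D \<subseteq> (\<Union>J\<in>T. score_set l \<eta> P (G J) ys)"
    unfolding D_def T_def
    by (rule list_decoder_joint_type_cover[where ys=ys and P=P and l=l and \<eta>=\<eta> and \<V>=\<V>]) blast
  have finT: "finite T" unfolding T_def D_def by (intro finite_imageI finite_list_decoder)
  have "card D \<le> card (\<Union>J\<in>T. score_set l \<eta> P (G J) ys)"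
    by (intro card_mono cover finite_UN_I finT finite_score_set)
  also have "\<dots> \<le> (\<Sum>J\<in>T. card (score_set l \<eta> P (G J) ys))" by (rule card_UN_le[OF finT])
  finally have "real (card D) \<le> (\<Sum>J\<in>T. real (card (score_set l \<eta> P (G J) ys)))"
    by (simp flip: of_nat_sum)
  also have "\<dots> \<le> (\<Sum>J\<in>T. B)"
    using G by (intro sum_mono) (auto simp: B_def intro: score_set_card_consistent[OF _ V P l _ \<eta>\<delta> slack])
  also have "\<dots> = real (card T) * B" by simp
  also have "real (card T) \<le> real ((length ys + 1) ^ K)"
    unfolding T_def K_def of_nat_le_iff by (rule card_joint_types)
  finally show ?thesis by (simp add: D_def B_def K_def add.commute mult_right_mono)
qed

section \<open>The probability of a decoding failure\<close>

text \<open>This is why only the average channel matters under nosy noise.\<close>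
lemma sum_positions_avg_channel:
  fixes xs :: "'x::finite list" and W :: "'x \<Rightarrow> 's \<Rightarrow> 'y::finite \<Rightarrow> real" and h :: "'x \<Rightarrow> 'y \<Rightarrow> real"
  assumes P: "\<And>a. P a > 0" and xs: "xs \<in> typ_class P c" and c: "c \<ge> 1"
  shows "(\<Sum>t<c. \<Sum>b\<in>UNIV. W (xs!t) (ss!t) b * h (xs!t) b)
     = real c * (\<Sum>a\<in>UNIV. \<Sum>b\<in>UNIV. P a * avg_channel W xs ss a b * h a b)"
proof -
  have len: "length xs = c" and cnt: "\<And>a. real (count_list xs a) = real (length xs) * P a"
    using xs by (auto simp: typ_class_def)
  have pos: "count_list xs a > 0" for a
  proof -
    have "real (length xs) * P a > 0" using c P[of a] len by simp
    thus ?thesis using cnt[of a] by simp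
  qed
  define S where "S a b = (\<Sum>t<length xs. if xs!t = a then W a (ss!t) b else 0)" for a b
  have summand: "real (length xs) * (P a * avg_channel W xs ss a b * h a b) = S a b * h a b" for a b
  proof -
    have "real (length xs) * (P a * avg_channel W xs ss a b * h a b)
        = real (count_list xs a) * avg_channel W xs ss a b * h a b"
      using cnt[of a] by simp
    thus ?thesis using pos[of a] by (simp add: avg_channel_def S_def)
  qed
  have "real (length xs) * (\<Sum>a\<in>UNIV. \<Sum>b\<in>UNIV. P a * avg_channel W xs ss a b * h a b)
      = (\<Sum>a\<in>UNIV. \<Sum>b\<in>UNIV. S a b * h a b)"
    by (simp only: sum_distrib_left summand)
  also have "\<dots> = (\<Sum>a\<in>UNIV. \<Sum>b\<in>UNIV. \<Sum>t<length xs. if xs!t = a then W a (ss!t) b * h a b else 0)"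
    unfolding S_def sum_distrib_right by (intro sum.cong refl) simp
  also have "\<dots> = (\<Sum>t<length xs. \<Sum>b\<in>UNIV. \<Sum>a\<in>UNIV. if xs!t = a then W a (ss!t) b * h a b else 0)"
    by (subst sum.swap, subst (2) sum.swap, subst sum.swap) (rule refl)
  also have "\<dots> = (\<Sum>t<length xs. \<Sum>b\<in>UNIV. W (xs!t) (ss!t) b * h (xs!t) b)"
    by (simp add: eq_commute)
  finally show ?thesis by (simp add: len)
qed

lemma tv_dist_lt_pointwise:
  fixes p q :: "'y::finite \<Rightarrow> real"
  assumes close: "\<And>b. \<bar>p b - q b\<bar> < d / real (card (UNIV::'y set))"
  shows "tv_dist p q < d"
proof -
  have "(\<Sum>b\<in>UNIV. \<bar>p b - q b\<bar>) < (\<Sum>b\<in>(UNIV::'y set). d / real (card (UNIV::'y set)))"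
    by (rule sum_strict_mono) (auto intro: close)
  also have "\<dots> = d" using card_UNIV_ge_1[where 'a='y] by simp
  finally have "(\<Sum>b\<in>UNIV. \<bar>p b - q b\<bar>) < d" .
  moreover have "0 < d / real (card (UNIV::'y set))"
    using close[of undefined] by (meson abs_ge_zero le_less_trans)
  hence "d > 0" by (simp add: zero_less_divide_iff)
  ultimately show ?thesis unfolding tv_dist_def by simp
qed

lemma decoding_failure_cover:
  fixes W :: "'x::finite \<Rightarrow> 's \<Rightarrow> 'y::finite \<Rightarrow> real" and P :: "'x \<Rightarrow> real"
  assumes P: "\<And>a. P a > 0" and xs: "xs \<in> typ_class P c" and c: "c \<ge> 1"
    and V0: "avg_channel W xs ss \<in> \<V>"
  defines "p \<equiv> \<lambda>t. W (xs!t) (ss!t)" and "Q \<equiv> real (card (UNIV::'y set))"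
  shows "{ys. length ys = c \<and> xs \<notin> list_decoder l \<eta> P ys \<V>}
    \<subseteq> (\<Union>b. upper_dev p (\<lambda>t y. of_bool (y = b)) c (\<eta> / Q))
      \<union> (\<Union>b. upper_dev p (\<lambda>t y. - of_bool (y = b)) c (\<eta> / Q))
      \<union> upper_dev p (\<lambda>t y. - ln (smooth l (avg_channel W xs ss) (xs!t) y)) c \<eta>"
proof (intro subsetI, rule ccontr)
  define V0 where "V0 = avg_channel W xs ss"
  fix ys assume "ys \<in> {ys. length ys = c \<and> xs \<notin> list_decoder l \<eta> P ys \<V>}"
  hence lys: "length ys = c" and notin: "xs \<notin> list_decoder l \<eta> P ys \<V>" by auto
  assume "ys \<notin> (\<Union>b. upper_dev p (\<lambda>t y. of_bool (y = b)) c (\<eta> / Q))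
      \<union> (\<Union>b. upper_dev p (\<lambda>t y. - of_bool (y = b)) c (\<eta> / Q))
      \<union> upper_dev p (\<lambda>t y. - ln (smooth l (avg_channel W xs ss) (xs!t) y)) c \<eta>"
  hence up: "\<And>b. ys \<notin> upper_dev p (\<lambda>t y. of_bool (y = b)) c (\<eta> / Q)"
    and down: "\<And>b. ys \<notin> upper_dev p (\<lambda>t y. - of_bool (y = b)) c (\<eta> / Q)"
    and score: "ys \<notin> upper_dev p (\<lambda>t y. - ln (smooth l V0 (xs!t) y)) c \<eta>"
    by (auto simp: V0_def)
  have mean: "(\<Sum>t<c. \<Sum>b\<in>UNIV. p t b * h (xs!t) b)
      = real c * (\<Sum>a\<in>UNIV. \<Sum>b\<in>UNIV. P a * V0 a b * h a b)" for h
    unfolding p_def V0_def by (rule sum_positions_avg_channel[OF P xs c])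
  have count: "(\<Sum>t<c. of_bool (ys!t = b)) = real (count_list ys b)" for b
    using sum_count_list[of "\<lambda>z. of_bool (z = b)" ys] lys by simp
  have close: "\<bar>emp_dist ys b - out_marg P V0 b\<bar> < \<eta> / Q" for b
  proof -
    have "\<bar>real (count_list ys b) - real c * out_marg P V0 b\<bar> < real c * (\<eta> / Q)"
      using up[of b] down[of b] lys mean[of "\<lambda>a y. of_bool (y = b)"]
        mean[of "\<lambda>a y. - of_bool (y = b)"] count[of b]
      by (auto simp: upper_dev_def out_marg_def sum_negf abs_less_iff)
    thus ?thesis using c lys by (simp add: emp_dist_def abs_less_iff field_simps)
  qed
  have "tv_dist (emp_dist ys) (out_marg P V0) < \<eta>"
    using close unfolding Q_def by (rule tv_dist_lt_pointwise)
  moreover have "xs \<in> score_set l \<eta> P V0 ys"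
  proof -
    have "real c * ell l P V0 - real c * \<eta> < (\<Sum>t<c. ln (smooth l V0 (xs!t) (ys!t)))"
      using score lys mean[of "\<lambda>a y. - ln (smooth l V0 a y)"]
      by (simp add: upper_dev_def ell_def sum_negf)
    thus ?thesis using xs lys by (simp add: score_set_def right_diff_distrib)
  qed
  ultimately have "xs \<in> list_decoder l \<eta> P ys \<V>"
    using V0 by (auto simp: list_decoder_def V0_def)
  thus False using notin by contradiction
qed

text \<open>Chernoff bounds for the deviation events of the cover: the symbol indicators have range 1
  and the smoothed negative log-likelihoods have range \<open>ln(|Y|/l)\<close>.\<close>
lemma symbol_deviation_bounds:
  fixes p :: "nat \<Rightarrow> 'y::finite \<Rightarrow> real"
  assumes p0: "\<And>t b. p t b \<ge> 0" and p1: "\<And>t. (\<Sum>b\<in>UNIV. p t b) = 1" and d: "0 < d" "d \<le> 2"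
  shows "(\<Sum>ys\<in>upper_dev p (\<lambda>t y. of_bool (y = b)) n d. \<Prod>t<n. p t (ys!t)) \<le> exp (- (n * d^2 / 4))"
    and "(\<Sum>ys\<in>upper_dev p (\<lambda>t y. - of_bool (y = b)) n d. \<Prod>t<n. p t (ys!t)) \<le> exp (- (n * d^2 / 4))"
proof -
  have "(\<Sum>ys\<in>upper_dev p (\<lambda>t y. of_bool (y = b)) n d. \<Prod>t<n. p t (ys!t))
      \<le> exp (- (n * d^2 / (4 * 1^2)))"
    by (rule chernoff_bound_range[OF p0 p1, where lo="\<lambda>t. 0"]) (use d in auto)
  thus "(\<Sum>ys\<in>upper_dev p (\<lambda>t y. of_bool (y = b)) n d. \<Prod>t<n. p t (ys!t)) \<le> exp (- (n * d^2 / 4))"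
    by simp
  have "(\<Sum>ys\<in>upper_dev p (\<lambda>t y. - of_bool (y = b)) n d. \<Prod>t<n. p t (ys!t))
      \<le> exp (- (n * d^2 / (4 * 1^2)))"
    by (rule chernoff_bound_range[OF p0 p1, where lo="\<lambda>t. -1"]) (use d in auto)
  thus "(\<Sum>ys\<in>upper_dev p (\<lambda>t y. - of_bool (y = b)) n d. \<Prod>t<n. p t (ys!t)) \<le> exp (- (n * d^2 / 4))"
    by simp
qed

lemma log_likelihood_deviation_bound:
  fixes p :: "nat \<Rightarrow> 'y::finite \<Rightarrow> real" and V :: "'x::finite \<Rightarrow> 'y \<Rightarrow> real" and xs :: "'x list"
  assumes p0: "\<And>t b. p t b \<ge> 0" and p1: "\<And>t. (\<Sum>b\<in>UNIV. p t b) = 1"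
    and V: "stoch V" and l: "0 < l" "l < 1" and eta: "0 < \<eta>" "\<eta> \<le> 1"
  defines "R \<equiv> ln (real (card (UNIV::'y set)) / l) + 1"
  shows "(\<Sum>ys\<in>upper_dev p (\<lambda>t y. - ln (smooth l V (xs!t) y)) n \<eta>. \<Prod>t<n. p t (ys!t))
    \<le> exp (- (n * \<eta>^2 / (4 * R^2)))"
proof (rule chernoff_bound_range[OF p0 p1, where lo="\<lambda>t. 0"])
  fix t b
  have ln: "- ln (real (card (UNIV::'y set)) / l) \<le> ln (smooth l V (xs!t) b)"
    "ln (smooth l V (xs!t) b) \<le> 0"
    using ln_between[OF l(1) smooth_bounds(1,2)[OF V l]] by auto
  thus "0 \<le> - ln (smooth l V (xs!t) b)" "- ln (smooth l V (xs!t) b) \<le> 0 + R"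
    unfolding R_def by linarith+
  have "R \<ge> 1" using ln unfolding R_def by linarith
  thus "R > 0" "\<eta> \<le> 2 * R" using eta by auto
qed (use eta in auto)

text \<open>The list-decoding error is exponentially small: the union bound over the cover, with the
  Chernoff bound for each deviation event.\<close>
lemma list_error_bound:
  fixes W :: "'x::finite \<Rightarrow> 's::finite \<Rightarrow> 'y::finite \<Rightarrow> real" and P :: "'x \<Rightarrow> real"
  assumes W: "avc W" and P: "\<And>a. P a > 0" and l: "0 < l" "l < 1" and eta: "0 < \<eta>" "\<eta> \<le> 1"
    and xs: "xs \<in> typ_class P c" and c: "c \<ge> 1"
    and V0: "avg_channel W xs ss \<in> \<V>" "stoch (avg_channel W xs ss)"
  defines "Q \<equiv> real (card (UNIV::'y set))"
  shows "list_err W (\<lambda>ys. list_decoder l \<eta> P ys \<V>) xs ss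
    \<le> 2 * Q * exp (- (real c * (\<eta> / Q)^2 / 4)) + exp (- (real c * \<eta>^2 / (4 * (ln (Q / l) + 1)^2)))"
proof -
  define p where "p = (\<lambda>t. W (xs!t) (ss!t))"
  define f where "f ys = (\<Prod>t<c. p t (ys!t))" for ys :: "'y list"
  define EI where "EI b = upper_dev p (\<lambda>t y. of_bool (y = b)) c (\<eta> / Q)" for b
  define EN where "EN b = upper_dev p (\<lambda>t y. - of_bool (y = b)) c (\<eta> / Q)" for b
  define EL where "EL = upper_dev p (\<lambda>t y. - ln (smooth l (avg_channel W xs ss) (xs!t) y)) c \<eta>"
  have p0: "\<And>t b. p t b \<ge> 0" and p1: "\<And>t. (\<Sum>b\<in>UNIV. p t b) = 1"
    using W by (auto simp: avc_def p_def)
  have f0: "f ys \<ge> 0" for ys unfolding f_def using p0 by (intro prod_nonneg) auto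
  have fin: "finite (EI b)" "finite (EN b)" "finite EL" "finite (\<Union>b. EI b)" "finite (\<Union>b. EN b)" for b
    by (simp_all add: EI_def EN_def EL_def finite_upper_dev)
  have "\<eta> / Q > 0" "\<eta> / Q \<le> 2"
    using eta card_UNIV_ge_1[where 'a='y] by (auto simp: Q_def divide_le_eq)
  note symbol = symbol_deviation_bounds[where p=p and n=c, OF p0 p1 this]
  have "list_err W (\<lambda>ys. list_decoder l \<eta> P ys \<V>) xs ss
      = sum f {ys. length ys = c \<and> xs \<notin> list_decoder l \<eta> P ys \<V>}"
    using xs by (simp add: list_err_def chan_prob_def f_def p_def typ_class_def)
  also have "\<dots> \<le> sum f ((\<Union>b. EI b) \<union> (\<Union>b. EN b) \<union> EL)"
    using decoding_failure_cover[OF P xs c V0(1), where l=l] fin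
    unfolding EI_def EN_def EL_def p_def Q_def by (intro sum_mono2 f0) auto
  also have "\<dots> \<le> sum f (\<Union>b. EI b) + sum f (\<Union>b. EN b) + sum f EL"
    using fin f0 by (intro order.trans[OF sum_Un_le_nonneg] add_mono sum_Un_le_nonneg) auto
  also have "\<dots> \<le> (\<Sum>b\<in>UNIV. sum f (EI b)) + (\<Sum>b\<in>UNIV. sum f (EN b)) + sum f EL"
    using fin f0 by (intro add_mono order.refl sum_UN_le_nonneg) auto
  also have "\<dots> \<le> (\<Sum>b\<in>(UNIV::'y set). exp (- (real c * (\<eta> / Q)^2 / 4)))
      + (\<Sum>b\<in>(UNIV::'y set). exp (- (real c * (\<eta> / Q)^2 / 4)))
      + exp (- (real c * \<eta>^2 / (4 * (ln (Q / l) + 1)^2)))"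
    using log_likelihood_deviation_bound[where p=p and xs=xs and n=c, OF p0 p1 V0(2) l eta] symbol
    by (intro add_mono sum_mono) (auto simp: f_def EI_def EN_def EL_def Q_def)
  finally show ?thesis by (simp add: Q_def)
qed

text \<open>The codebook has rate \<open>H(P) - \<xi>\<close> for all large \<open>c\<close> (the factor \<open>(e(c+1))^{|X|}\<close> is
  subexponential).\<close>
lemma codebook_size_eventually:
  fixes P :: "'x::finite \<Rightarrow> real"
  assumes P: "\<And>a. P a > 0" "(\<Sum>a\<in>UNIV. P a) = 1" and \<xi>: "\<xi> > 0"
  shows "\<forall>\<^sub>F c in sequentially. (\<forall>a. real c * P a \<in> \<nat>) \<longrightarrow>
    exp (real c * (entropy P - \<xi>)) \<le> real (card (typ_class P c))"
proof -
  define K where "K = card (UNIV::'x set)"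
  have "\<forall>\<^sub>F c in sequentially. real K + real K * ln (real c + 1) \<le> \<xi> * real c"
    by (rule eventually_log_le_linear[OF \<xi>])
  moreover have "\<forall>\<^sub>F c in sequentially. c \<ge> 1" by (rule eventually_ge_at_top)
  ultimately show ?thesis
  proof eventually_elim
    case (elim c)
    have "exp (real K * ln (real c + 1)) = exp (ln (real c + 1)) ^ K" by (rule exp_of_nat_mult)
    moreover have "exp (real K) = exp 1 ^ K" using exp_of_nat_mult[of K 1] by simp
    ultimately have "(exp 1 * (real c + 1)) ^ K = exp (real K + real K * ln (real c + 1))"
      by (simp add: exp_add power_mult_distrib)
    also have "\<dots> \<le> exp (\<xi> * real c)" using elim(1) by simp
    finally have "exp (real c * entropy P) / exp (\<xi> * real c)
        \<le> exp (real c * entropy P) / (exp 1 * (real c + 1)) ^ K"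
      by (intro divide_left_mono) auto
    hence "exp (real c * (entropy P - \<xi>)) \<le> exp (real c * entropy P) / (exp 1 * (real c + 1)) ^ K"
      by (simp add: exp_diff[symmetric] algebra_simps)
    thus ?case using typ_class_lower[OF P elim(2)] unfolding K_def by auto
  qed
qed

lemma list_size_eventually:
  fixes P :: "'x::finite \<Rightarrow> real"
  assumes P: "\<And>a. P a > 0" "(\<Sum>a\<in>UNIV. P a) = 1" and l: "0 < l" "l < 1" and \<eta>\<delta>: "\<eta> \<le> \<delta>"
    and slack: "- ln (1 - l) + \<eta> + 2 * \<eta> * ln (real (card (UNIV::'y::finite set)) / l) \<le> \<xi> / 4"
    and \<xi>: "\<xi> > 0"
  shows "\<forall>\<^sub>F c in sequentially. \<forall>(\<V> :: ('x \<Rightarrow> 'y \<Rightarrow> real) set) ys. (\<forall>V\<in>\<V>. stoch V) \<longrightarrow>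
    length ys = c \<longrightarrow> real (card (list_decoder l \<eta> P ys \<V>))
      \<le> exp (real c * (Sup (cond_entropy P ` Vset \<V> P ys \<delta>) + \<xi>))"
proof -
  define KQ where "KQ = card (UNIV::'x set) * card (UNIV::'y set)"
  have "\<forall>\<^sub>F c in sequentially. 0 + real KQ * ln (real c + 1) \<le> (3 * \<xi> / 4) * real c"
    by (rule eventually_log_le_linear) (use \<xi> in auto)
  thus ?thesis
  proof eventually_elim
    case (elim c)
    have "(real c + 1) ^ KQ = exp (real KQ * ln (real c + 1))"
      using exp_of_nat_mult[of KQ "ln (real c + 1)"] by simp
    also have "\<dots> \<le> exp (real c * (3 * \<xi> / 4))"
      using elim by (intro exp_mono) (simp add: mult.commute)
    finally have poly: "(real c + 1) ^ KQ \<le> exp (real c * (3 * \<xi> / 4))" .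
    show ?case
    proof (intro allI impI)
      fix \<V> :: "('x \<Rightarrow> 'y \<Rightarrow> real) set" and ys :: "'y list"
      assume V: "\<forall>V\<in>\<V>. stoch V" and lys: "length ys = c"
      define M where "M = Sup (cond_entropy P ` Vset \<V> P ys \<delta>)"
      have "real (card (list_decoder l \<eta> P ys \<V>)) \<le> (real c + 1) ^ KQ * exp (real c * (M + \<xi> / 4))"
        using list_decoder_card[OF _ P l \<eta>\<delta> slack] V lys unfolding KQ_def M_def by blast
      also have "\<dots> \<le> exp (real c * (3 * \<xi> / 4)) * exp (real c * (M + \<xi> / 4))"
        by (intro mult_right_mono poly) auto
      also have "\<dots> = exp (real c * (M + \<xi>))" by (simp add: exp_add[symmetric] algebra_simps)
      finally show "real (card (list_decoder l \<eta> P ys \<V>)) \<le> exp (real c * (M + \<xi>))" .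
    qed
  qed
qed

lemma list_error_eventually:
  fixes W :: "'x::finite \<Rightarrow> 's::finite \<Rightarrow> 'y::finite \<Rightarrow> real" and P :: "'x \<Rightarrow> real"
  assumes W: "avc W" and P: "\<And>a. P a > 0" and l: "0 < l" "l < 1" and eta: "0 < \<eta>" "\<eta> \<le> 1"
  shows "\<exists>E>0. \<forall>\<^sub>F c in sequentially. \<forall>xs\<in>typ_class P c. \<forall>ss \<V>. (\<forall>V\<in>\<V>. stoch V) \<longrightarrow>
    avg_channel W xs ss \<in> \<V> \<longrightarrow> list_err W (\<lambda>ys. list_decoder l \<eta> P ys \<V>) xs ss \<le> exp (- real c * E)"
proof -
  define Q where "Q = real (card (UNIV::'y set))"
  define \<kappa>\<^sub>1 where "\<kappa>\<^sub>1 = (\<eta> / Q)^2 / 4"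
  define \<kappa>\<^sub>2 where "\<kappa>\<^sub>2 = \<eta>^2 / (4 * (ln (Q / l) + 1)^2)"
  define E where "E = min \<kappa>\<^sub>1 \<kappa>\<^sub>2 / 2"
  have Q1: "Q \<ge> 1" unfolding Q_def by (rule card_UNIV_ge_1)
  have "ln (Q / l) \<ge> 0" using Q1 l by (simp add: le_divide_eq)
  hence E0: "E > 0" using eta Q1 by (simp add: E_def \<kappa>\<^sub>1_def \<kappa>\<^sub>2_def)
  have "\<forall>\<^sub>F c in sequentially. ln (2 * Q + 1) + 0 * ln (real c + 1) \<le> E * real c"
    by (rule eventually_log_le_linear[OF E0])
  moreover have "\<forall>\<^sub>F c in sequentially. c \<ge> 1" by (rule eventually_ge_at_top)
  ultimately have "\<forall>\<^sub>F c in sequentially. \<forall>xs\<in>typ_class P c. \<forall>ss \<V>. (\<forall>V\<in>\<V>. stoch V) \<longrightarrow>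
    avg_channel W xs ss \<in> \<V> \<longrightarrow> list_err W (\<lambda>ys. list_decoder l \<eta> P ys \<V>) xs ss \<le> exp (- real c * E)"
  proof eventually_elim
    case (elim c)
    have "exp (ln (2 * Q + 1)) \<le> exp (real c * E)" using elim(1) by (simp add: mult.commute)
    hence "2 * Q + 1 \<le> exp (real c * E)" using Q1 by simp
    hence "(2 * Q + 1) * exp (- (real c * (2 * E))) \<le> exp (real c * E) * exp (- (real c * (2 * E)))"
      by (intro mult_right_mono) auto
    also have "\<dots> = exp (- real c * E)" by (simp add: exp_add[symmetric] algebra_simps)
    finally have total: "(2 * Q + 1) * exp (- (real c * (2 * E))) \<le> exp (- real c * E)" .
    have k: "exp (- (real c * \<kappa>\<^sub>1)) \<le> exp (- (real c * (2 * E)))"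
      "exp (- (real c * \<kappa>\<^sub>2)) \<le> exp (- (real c * (2 * E)))"
      by (auto simp: E_def intro!: mult_left_mono)
    show ?case
    proof (intro ballI allI impI)
      fix xs ss and \<V> :: "('x \<Rightarrow> 'y \<Rightarrow> real) set"
      assume xs: "xs \<in> typ_class P c" and V: "\<forall>V\<in>\<V>. stoch V" and V0: "avg_channel W xs ss \<in> \<V>"
      have "list_err W (\<lambda>ys. list_decoder l \<eta> P ys \<V>) xs ss
          \<le> 2 * Q * exp (- (real c * \<kappa>\<^sub>1)) + exp (- (real c * \<kappa>\<^sub>2))"
        using list_error_bound[OF W P l eta xs elim(2) V0] V V0
        by (simp add: Q_def \<kappa>\<^sub>1_def \<kappa>\<^sub>2_def power_divide)
      also have "\<dots> \<le> (2 * Q + 1) * exp (- (real c * (2 * E)))"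
        using k Q1 by (simp add: algebra_simps add_mono)
      finally show "list_err W (\<lambda>ys. list_decoder l \<eta> P ys \<V>) xs ss \<le> exp (- real c * E)"
        using total by linarith
    qed
  qed
  thus ?thesis using E0 by blast
qed

text \<open>Parameters: \<open>l = 1 - e^{-\<xi>/8}\<close> and \<open>\<eta>\<close> small enough make the slack of the key inequality
  at most \<open>\<xi>/4\<close>, while \<open>\<eta> \<le> \<delta>\<close> keeps every channel used by the decoder in \<open>\<V>(y, \<delta>)\<close>.\<close>
lemma smoothing_parameters:
  assumes \<xi>: "\<xi> > 0" and \<delta>: "\<delta> > 0"
  obtains l \<eta> where "0 < l" "l < 1" "0 < \<eta>" "\<eta> \<le> \<delta>" "\<eta> \<le> 1"
    "- ln (1 - l) + \<eta> + 2 * \<eta> * ln (real (card (UNIV::'y::finite set)) / l) \<le> \<xi> / 4"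
proof -
  define l where "l = 1 - exp (- \<xi> / 8)"
  define Lg where "Lg = ln (real (card (UNIV::'y set)) / l)"
  define \<eta> where "\<eta> = min (min \<delta> 1) (\<xi> / (8 * (1 + 2 * Lg)))"
  have l: "0 < l" "l < 1" using \<xi> by (auto simp: l_def)
  have "real (card (UNIV::'y set)) / l \<ge> 1"
    using card_UNIV_ge_1[where 'a='y] l by (simp add: le_divide_eq)
  hence Lg0: "Lg \<ge> 0" by (simp add: Lg_def)
  have \<eta>: "0 < \<eta>" "\<eta> \<le> \<delta>" "\<eta> \<le> 1" using \<xi> \<delta> Lg0 by (auto simp: \<eta>_def)
  have "\<eta> * (8 * (1 + 2 * Lg)) \<le> \<xi>"
    using Lg0 by (simp add: \<eta>_def pos_le_divide_eq[symmetric])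
  hence "- ln (1 - l) + \<eta> + 2 * \<eta> * Lg \<le> \<xi> / 4" by (simp add: l_def algebra_simps)
  thus ?thesis using that l \<eta> unfolding Lg_def by blast
qed

text \<open>Choosing a positive exponent for every \<open>\<xi> > 0\<close> defines the function \<open>E\<^sub>1\<close>.\<close>
lemma positive_choice:
  assumes "\<And>\<xi>. \<xi> > 0 \<Longrightarrow> \<exists>e>0. F \<xi> e"
  shows "\<exists>E. (\<forall>\<xi>>0. E \<xi> > (0::real)) \<and> (\<forall>\<xi>>0. F \<xi> (E \<xi>))"
proof -
  have "\<forall>\<xi>. \<exists>e. \<xi> > 0 \<longrightarrow> e > 0 \<and> F \<xi> e" using assms by blast
  then obtain E where "\<forall>\<xi>. \<xi> > 0 \<longrightarrow> E \<xi> > 0 \<and> F \<xi> (E \<xi>)" by metis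
  thus ?thesis by blast
qed

lemma list_code_fixed_xi:
  fixes W :: "'x::finite \<Rightarrow> 's::finite \<Rightarrow> 'y::finite \<Rightarrow> real"
    and P :: "'x \<Rightarrow> real" and Vfam :: "nat \<Rightarrow> ('x \<Rightarrow> 'y \<Rightarrow> real) set set"
  assumes W: "avc W" and P: "\<And>a. P a > 0" "(\<Sum>a\<in>UNIV. P a) = 1" and \<delta>: "\<delta> > 0"
    and stoch: "\<And>c \<V> V. \<V> \<in> Vfam c \<Longrightarrow> V \<in> \<V> \<Longrightarrow> stoch V" and \<xi>: "\<xi> > 0"
  shows "\<exists>E>0. \<forall>\<^sub>F c in sequentially. (\<forall>a. real c * P a \<in> \<nat>) \<longrightarrow>
       real (card (typ_class P c)) \<ge> exp (real c * (entropy P - \<xi>)) \<and>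
       (\<exists>Dec :: 'y list \<Rightarrow> ('x \<Rightarrow> 'y \<Rightarrow> real) set \<Rightarrow> 'x list set.
          \<forall>\<V>\<in>Vfam c.
            (\<forall>ys. length ys = c \<longrightarrow>
               Dec ys \<V> \<subseteq> typ_class P c \<and>
               (if Vset \<V> P ys \<delta> = {} then Dec ys \<V> = {}
                else real (card (Dec ys \<V>)) \<le>
                  exp (real c * (Sup (cond_entropy P ` Vset \<V> P ys \<delta>) + \<xi>)))) \<and>
            (\<forall>xs\<in>typ_class P c. \<forall>ss::'s list. length ss = c \<longrightarrow>
               avg_channel W xs ss \<in> \<V> \<longrightarrow>
               list_err W (\<lambda>ys. Dec ys \<V>) xs ss \<le> exp (- real c * E)))"
proof -
  obtain l \<eta> where l: "0 < l" "l < 1" and \<eta>: "0 < \<eta>" "\<eta> \<le> \<delta>" "\<eta> \<le> 1"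
    and slack: "- ln (1 - l) + \<eta> + 2 * \<eta> * ln (real (card (UNIV::'y set)) / l) \<le> \<xi> / 4"
    by (rule smoothing_parameters[OF \<xi> \<delta>])
  obtain E where "E > 0" and err: "\<forall>\<^sub>F c in sequentially. \<forall>xs\<in>typ_class P c. \<forall>ss \<V>.
      (\<forall>V\<in>\<V>. stoch V) \<longrightarrow> avg_channel W xs ss \<in> \<V> \<longrightarrow>
      list_err W (\<lambda>ys. list_decoder l \<eta> P ys \<V>) xs ss \<le> exp (- real c * E)"
    using list_error_eventually[where P=P, OF W P(1) l \<eta>(1,3)] by (elim exE conjE)
  have "\<forall>\<^sub>F c in sequentially. (\<forall>a. real c * P a \<in> \<nat>) \<longrightarrow>
       real (card (typ_class P c)) \<ge> exp (real c * (entropy P - \<xi>)) \<and>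
       (\<forall>\<V>\<in>Vfam c.
            (\<forall>ys. length ys = c \<longrightarrow> list_decoder l \<eta> P ys \<V> \<subseteq> typ_class P c \<and>
               (if Vset \<V> P ys \<delta> = {} then list_decoder l \<eta> P ys \<V> = {}
                else real (card (list_decoder l \<eta> P ys \<V>)) \<le>
                  exp (real c * (Sup (cond_entropy P ` Vset \<V> P ys \<delta>) + \<xi>)))) \<and>
            (\<forall>xs\<in>typ_class P c. \<forall>ss::'s list. length ss = c \<longrightarrow> avg_channel W xs ss \<in> \<V> \<longrightarrow>
               list_err W (\<lambda>ys. list_decoder l \<eta> P ys \<V>) xs ss \<le> exp (- real c * E)))"
    using codebook_size_eventually[where P=P, OF P \<xi>]
      list_size_eventually[where P=P, OF P l \<eta>(2) slack \<xi>] err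
  proof eventually_elim
    case (elim c)
    show ?case
    proof (intro impI conjI ballI allI, goal_cases)
      case 1 thus ?case using elim(1) by blast
    next
      case (2 \<V> ys) thus ?case using list_decoder_subset[of l \<eta> P ys \<V>] by simp
    next
      case (3 \<V> ys)
      have "\<forall>V\<in>\<V>. stoch V" using stoch 3 by blast
      thus ?case using elim(2) 3 list_decoder_empty[OF _ \<eta>(2), of \<V> P ys l] by simp
    next
      case (4 \<V> xs ss) thus ?case using elim(3) stoch by blast
    qed
  qed
  thus ?thesis
    by (intro exI[of _ E] conjI \<open>E > 0\<close>, elim eventually_mono,
        intro impI conjI exI[of _ "\<lambda>ys \<V>. list_decoder l \<eta> P ys \<V>"]) blast+
qed

text \<open>Lemma 4.\<close>
theorem lemma4:
  fixes W :: "'x::finite \<Rightarrow> 's::finite \<Rightarrow> 'y::finite \<Rightarrow> real"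
    and P :: "'x \<Rightarrow> real" and \<delta> v :: real
    and Vfam :: "nat \<Rightarrow> ('x \<Rightarrow> 'y \<Rightarrow> real) set set"
  assumes "avc W"
    and "\<forall>a. P a > 0" and "(\<Sum>a\<in>UNIV. P a) = 1"
    and "\<delta> > 0"
    and "\<forall>c\<ge>1. finite (Vfam c) \<and> real (card (Vfam c)) \<le> real c powr v"
    and "\<forall>c. \<forall>\<V>\<in>Vfam c. \<forall>V\<in>\<V>. stoch V"
  shows "\<exists>E1 :: real \<Rightarrow> real. (\<forall>\<xi>>0. E1 \<xi> > 0) \<and>
    (\<forall>\<xi>>0. \<exists>c0::nat. \<forall>c\<ge>c0. (\<forall>a. real c * P a \<in> \<nat>) \<longrightarrow>
       real (card (typ_class P c)) \<ge> exp (real c * (entropy P - \<xi>)) \<and>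
       (\<exists>Dec :: 'y list \<Rightarrow> ('x \<Rightarrow> 'y \<Rightarrow> real) set \<Rightarrow> 'x list set.
          \<forall>\<V>\<in>Vfam c.
            (\<forall>ys. length ys = c \<longrightarrow>
               Dec ys \<V> \<subseteq> typ_class P c \<and>
               (if Vset \<V> P ys \<delta> = {} then Dec ys \<V> = {}
                else real (card (Dec ys \<V>)) \<le>
                  exp (real c * (Sup (cond_entropy P ` Vset \<V> P ys \<delta>) + \<xi>)))) \<and>
            (\<forall>xs\<in>typ_class P c. \<forall>ss::'s list. length ss = c \<longrightarrow>
               avg_channel W xs ss \<in> \<V> \<longrightarrow>
               list_err W (\<lambda>ys. Dec ys \<V>) xs ss \<le> exp (- real c * E1 \<xi>))))"
proof (rule positive_choice, goal_cases)
  case (1 \<xi>)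
  have P: "\<And>a. P a > 0" and stoch: "\<And>c \<V> V. \<V> \<in> Vfam c \<Longrightarrow> V \<in> \<V> \<Longrightarrow> stoch V"
    using assms(2,6) by auto
  show ?case
    using list_code_fixed_xi[where P=P, OF assms(1) P assms(3,4) stoch 1]
    unfolding eventually_sequentially .
qed

end
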